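(* Let $\mathcal{A}$ and $\mathcal{B}$ be finite-dimensional von Neumann algebras with traces $d$ and $\tau$ respectively, let $k>0$, and let $(\mathcal{A},\mathcal{B},d,\tau,\mathcal{F})$ be a von Neumann $k$-bi-algebra with $\mathcal{F}^*\mathcal{F}=kI$. Then for every non-zero $x\in\mathcal{A}$ and all $\epsilon,\eta\in[0,1]$ with $\epsilon+\eta\le1$, \[\mathcal{S}^2_\epsilon(x)\,\mathcal{S}^2_\eta(\mathcal{F}(x))\ge k(1-\epsilon-\eta)^2.\]
   Context: A finite von Neumann algebra $\mathcal{M}$ is taken with a trace $\tau_{\mathcal{M}}$ (faithful normal tracial positive linear functional). $\|x\|_p=\tau_{\mathcal{M}}(|x|^p)^{1/p}$ for $p<\infty$, $\|x\|_\infty$ is the operator norm, $\mathcal{R}(x)$ is the range projection. For $\epsilon\in[0,1]$, $p\in[1,\infty]$, the $(p,\epsilon)$ smooth support of $x\in\mathcal{M}$ is $\mathcal{S}^p_\epsilon(x)=\inf\{\tau_{\mathcal{M}}(H\mathcal{R}(x)): H\in\mathcal{M},\ 0\le H\le I,\ \|(I-H)x\|_p\le\epsilon\|x\|_p\}$ (computed with $d$ in $\mathcal{A}$, $\tau$ in $\mathcal{B}$). For a linear map $\mathcal{F}:\mathcal{A}\to\mathcal{B}$, $\|\mathcal{F}\|_{q\to p}=\sup\{\|\mathcal{F}(x)\|_p:\|x\|_q=1\}$ and $\mathcal{F}^*:\mathcal{B}\to\mathcal{A}$ is the adjoint, $\tau(\mathcal{F}(x)y^* )=d(x\,\mathcal{F}^*(y)^*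 )$. For $k>0$, a $k$-transform is a linear $\mathcal{F}:\mathcal{A}\to\mathcal{B}$ with $\|\mathcal{F}\|_{1\to\infty}\le1$ and $\|\mathcal{F}^*\mathcal{F}(x)\|_\infty\ge k\|x\|_\infty$ for all $x$; $(\mathcal{A},\mathcal{B},d,\tau,\mathcal{F})$ is then a von Neumann $k$-bi-algebra. *)

theory Defs
  imports "HOL-Analysis.Analysis"
begin

text \<open>Finite-dimensional von Neumann algebras are modelled concretely as unital
 *-subalgebras of the algebra of complex n x n matrices (n = CARD('n)), acting on the
 Hilbert space complex^'n with its Euclidean (L2) norm.\<close>

definition cadj :: "complex^'n^'m \<Rightarrow> complex^'m^'n" where
  "cadj M = (\<chi> i j. cnj (M $ j $ i))"

definition qform :: "complex^'n^'n \<Rightarrow> complex^'n \<Rightarrow> complex" where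
  "qform M v = (\<Sum>i\<in>UNIV. cnj (v $ i) * ((M *v v) $ i))"

definition psd :: "complex^'n^'n \<Rightarrow> bool" where
  "psd M \<longleftrightarrow> cadj M = M \<and> (\<forall>v. qform M v \<in> \<real> \<and> 0 \<le> Re (qform M v))"

definition absm :: "complex^'n^'n \<Rightarrow> complex^'n^'n" where
  "absm x = (THE h. psd h \<and> h ** h = cadj x ** x)"

definition opnorm :: "complex^'n^'n \<Rightarrow> real" where
  "opnorm M = onorm (\<lambda>v. M *v v)"

definition rproj :: "complex^'n^'n \<Rightarrow> complex^'n^'n" where
  "rproj x = (THE P. P ** P = P \<and> cadj P = P \<and> range (\<lambda>v. P *v v) = range (\<lambda>v. x *v v))"

definition is_vna :: "(complex^'n^'n) set \<Rightarrow> bool" where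
  "is_vna M \<longleftrightarrow> mat 1 \<in> M
     \<and> (\<forall>x\<in>M. \<forall>y\<in>M. x + y \<in> M \<and> x ** y \<in> M)
     \<and> (\<forall>c. \<forall>x\<in>M. mat c ** x \<in> M)
     \<and> (\<forall>x\<in>M. cadj x \<in> M)"

definition clinear_fun :: "(complex^'n^'n) set \<Rightarrow> (complex^'n^'n \<Rightarrow> complex) \<Rightarrow> bool" where
  "clinear_fun M f \<longleftrightarrow> (\<forall>x\<in>M. \<forall>y\<in>M. f (x + y) = f x + f y)
     \<and> (\<forall>c. \<forall>x\<in>M. f (mat c ** x) = c * f x)"

definition clinear_map :: "(complex^'n^'n) set \<Rightarrow> (complex^'n^'n \<Rightarrow> complex^'m^'m) \<Rightarrow> bool" where
  "clinear_map M f \<longleftrightarrow> (\<forall>x\<in>M. \<forall>y\<in>M. f (x + y) = f x + f y)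
     \<and> (\<forall>c. \<forall>x\<in>M. f (mat c ** x) = mat c ** f x)"

text \<open>faithful normal tracial positive linear functional (normality is automatic in finite dimension)\<close>
definition is_trace :: "(complex^'n^'n) set \<Rightarrow> (complex^'n^'n \<Rightarrow> complex) \<Rightarrow> bool" where
  "is_trace M t \<longleftrightarrow> clinear_fun M t
     \<and> (\<forall>x\<in>M. \<forall>y\<in>M. t (x ** y) = t (y ** x))
     \<and> (\<forall>x\<in>M. psd x \<longrightarrow> t x \<in> \<real> \<and> 0 \<le> Re (t x))
     \<and> (\<forall>x\<in>M. psd x \<longrightarrow> t x = 0 \<longrightarrow> x = 0)"

definition norm1 :: "(complex^'n^'n \<Rightarrow> complex) \<Rightarrow> complex^'n^'n \<Rightarrow> real" where
  "norm1 t x = Re (t (absm x))"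

definition norm2 :: "(complex^'n^'n \<Rightarrow> complex) \<Rightarrow> complex^'n^'n \<Rightarrow> real" where
  "norm2 t x = sqrt (Re (t (absm x ** absm x)))"

definition is_map_adjoint ::
  "(complex^'n^'n) set \<Rightarrow> (complex^'m^'m) set \<Rightarrow> (complex^'n^'n \<Rightarrow> complex) \<Rightarrow> (complex^'m^'m \<Rightarrow> complex)
   \<Rightarrow> (complex^'n^'n \<Rightarrow> complex^'m^'m) \<Rightarrow> (complex^'m^'m \<Rightarrow> complex^'n^'n) \<Rightarrow> bool" where
  "is_map_adjoint A B d t F Fs \<longleftrightarrow> (\<forall>y\<in>B. Fs y \<in> A) \<and> clinear_map B Fs
     \<and> (\<forall>x\<in>A. \<forall>y\<in>B. t (F x ** cadj y) = d (x ** cadj (Fs y)))"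

text \<open>k-transform (F linear A \<rightarrow> B, norm 1\<rightarrow>\<infinity> at most 1, and the lower bound on F^*F)\<close>
definition k_transform ::
  "(complex^'n^'n) set \<Rightarrow> (complex^'m^'m) set \<Rightarrow> (complex^'n^'n \<Rightarrow> complex) \<Rightarrow> (complex^'m^'m \<Rightarrow> complex)
   \<Rightarrow> real \<Rightarrow> (complex^'n^'n \<Rightarrow> complex^'m^'m) \<Rightarrow> (complex^'m^'m \<Rightarrow> complex^'n^'n) \<Rightarrow> bool" where
  "k_transform A B d t k F Fs \<longleftrightarrow> (\<forall>x\<in>A. F x \<in> B) \<and> clinear_map A F
     \<and> Sup {opnorm (F x) | x. x \<in> A \<and> norm1 d x = 1} \<le> 1
     \<and> (\<forall>x\<in>A. opnorm (Fs (F x)) \<ge> k * opnorm x)"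

definition smooth_supp2 :: "(complex^'n^'n) set \<Rightarrow> (complex^'n^'n \<Rightarrow> complex) \<Rightarrow> real \<Rightarrow> complex^'n^'n \<Rightarrow> real" where
  "smooth_supp2 M t eps x = Inf {Re (t (H ** rproj x)) | H. H \<in> M \<and> psd H \<and> psd (mat 1 - H)
        \<and> norm2 t ((mat 1 - H) ** x) \<le> eps * norm2 t x}"

end

theory Submission
  imports Defs
begin

text \<open>Let \<open>y = F x\<close>, let \<open>P\<close> and \<open>Q\<close> be the range projections of \<open>x\<close> and \<open>y\<close>, and let \<open>H\<close>
  and \<open>K\<close> be admissible in the definitions of the two smooth supports. As \<open>F\<^sup>*F = k\<close>, the map
  \<open>F\<close> multiplies 2-norms by \<open>sqrt k\<close>. Compressing \<open>K\<close> to the contraction \<open>K' = Q K Q\<close>, which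
  still almost fixes \<open>y\<close>, two triangle inequalities give
  \<open>\<parallel>K' F(H x)\<parallel>\<^sub>2 \<ge> sqrt k (1 - \<epsilon> - \<eta>) \<parallel>x\<parallel>\<^sub>2\<close>. Conversely
  \<open>\<parallel>K' w\<parallel>\<^sub>2\<^sup>2 \<le> \<parallel>w\<parallel>\<^sub>\<infinity>\<^sup>2 \<tau>(K Q)\<close>, and
  \<open>\<parallel>F(H x)\<parallel>\<^sub>\<infinity> \<le> \<parallel>H x\<parallel>\<^sub>1 \<le> d(H P)\<^sup>1\<^sup>/\<^sup>2 \<parallel>x\<parallel>\<^sub>2\<close> by \<open>\<parallel>F\<parallel>\<^sub>1\<^sub>\<rightarrow>\<^sub>\<infinity> \<le> 1\<close>, a polar
  decomposition of \<open>H x\<close> and the Cauchy--Schwarz inequality for the trace. Hence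
  \<open>k (1 - \<epsilon> - \<eta>)\<^sup>2 \<le> d(H P) \<tau>(K Q)\<close>, and taking infima gives the theorem. The square
  roots, projections and polar decompositions needed inside the algebras come from a functional
  calculus for Hermitian matrices, obtained from the spectral theorem by Lagrange interpolation.\<close>

section \<open>Adjoints and positive matrices\<close>

lemma cadj_cadj [simp]: "cadj (cadj M) = M"
  by (simp add: cadj_def vec_eq_iff)

lemma cadj_nth [simp]: "cadj M $ i $ j = cnj (M $ j $ i)"
  by (simp add: cadj_def)

lemma cadj_mult: "cadj (A ** B) = cadj B ** (cadj A :: complex^_^_)"
  by (simp add: cadj_def matrix_matrix_mult_def vec_eq_iff mult.commute)

lemma cadj_add: "cadj (A + B) = cadj A + cadj B"
  by (simp add: cadj_def vec_eq_iff)

lemma cadj_diff: "cadj (A - B) = cadj A - cadj B"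
  by (simp add: cadj_def vec_eq_iff)

lemma cadj_mat [simp]: "cadj (mat c) = mat (cnj c)"
  by (simp add: cadj_def mat_def vec_eq_iff)

lemma cadj_zero [simp]: "cadj 0 = 0"
  by (simp add: cadj_def vec_eq_iff)

lemma cadj_scaleR: "cadj (c *\<^sub>R A) = c *\<^sub>R cadj (A :: complex^'n^'m)"
  by (simp add: vec_eq_iff)

lemma cadj_eq_zero_iff [simp]: "cadj A = 0 \<longleftrightarrow> A = 0"
  by (metis cadj_cadj cadj_zero)

lemma mat_mult_left_nth: "(mat c ** A) $ i $ j = c * (A $ i $ j :: complex)"
  unfolding matrix_matrix_mult_def mat_def
  by (simp add: if_distrib if_distribR sum.delta cong: if_cong)

lemma mat_mult_right_nth: "(A ** mat c) $ i $ j = (A $ i $ j :: complex) * c"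
  unfolding matrix_matrix_mult_def mat_def
  by (simp add: if_distrib if_distribR sum.delta' cong: if_cong)

lemma mat_mult_commute: "A ** mat c = mat c ** (A :: complex^'n^'n)"
  by (simp add: vec_eq_iff mat_mult_left_nth mat_mult_right_nth mult.commute)

lemma cadj_mat_mult: "cadj (mat c ** A) = mat (cnj c) ** cadj (A :: complex^'n^'n)"
  by (simp add: cadj_mult mat_mult_commute)

lemma mat_of_real_mult_vec: "mat (complex_of_real c) *v v = c *\<^sub>R (v :: complex^'n)"
  unfolding vec_eq_iff matrix_vector_mult_def mat_def
  by (simp add: if_distrib if_distribR sum.delta cong: if_cong flip: scaleR_conv_of_real)

lemma mat_of_real_mult: "mat (complex_of_real c) ** A = c *\<^sub>R (A :: complex^'n^'n)"
  by (simp add: vec_eq_iff mat_mult_left_nth flip: scaleR_conv_of_real)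

lemma scaleR_matrix_vector_mult: "(c *\<^sub>R A) *v v = c *\<^sub>R ((A :: complex^'n^'n) *v v)"
  by (simp only: mat_of_real_mult[symmetric] matrix_vector_mul_assoc[symmetric] mat_of_real_mult_vec)

lemma matrix_vector_mult_scaleR_right: "(A :: complex^'n^'m) *v (c *\<^sub>R v) = c *\<^sub>R (A *v v)"
  using matrix_vector_mul_linear[of A] by (simp add: linear_iff)

lemma matrix_mul_scaleR_left: "(c *\<^sub>R A) ** B = c *\<^sub>R (A ** (B :: complex^'n^'n))"
  by (simp add: scalar_matrix_assoc)

lemma matrix_mul_scaleR_right: "A ** (c *\<^sub>R B) = c *\<^sub>R (A ** (B :: complex^'n^'n))"
  by (simp add: matrix_scalar_ac scalar_matrix_assoc)

lemma matrix_mul_mat_of_real_middle: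
  "(A :: complex^'n^'n) ** mat (complex_of_real c) ** B = c *\<^sub>R (A ** (B :: complex^'n^'n))"
  unfolding mat_mult_commute[of A] mat_of_real_mult by (rule matrix_mul_scaleR_left)

lemma matrix_add_rdistrib: "(B + C) ** A = B ** A + C ** (A :: complex^'n^'n)"
  by (vector matrix_matrix_mult_def sum.distrib[symmetric] field_simps)

lemma matrix_diff_ldistrib: "A ** (B - C) = A ** B - A ** (C :: complex^'n^'n)"
  by (vector matrix_matrix_mult_def sum_subtractf[symmetric] field_simps)

lemma matrix_diff_rdistrib: "(B - C) ** A = B ** A - C ** (A :: complex^'n^'n)"
  by (vector matrix_matrix_mult_def sum_subtractf[symmetric] field_simps)

lemma matrix_eq_on_spanning:
  fixes A B :: "complex^'n^'n"
  assumes "span E = UNIV" and "\<And>e. e \<in> E \<Longrightarrow> A *v e = B *v e"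
  shows "A = B"
proof -
  have "A *v x = B *v x" for x
    by (rule linear_eq_on_span[where B=E, of "(*v) A" "(*v) B"]) (auto simp: assms)
  then show ?thesis by (simp add: matrix_eq)
qed

text \<open>\<^const>\<open>inner\<close> on \<^typ>\<open>complex^'n\<close> is the real part of the Hilbert space inner product
  \<open>cinner\<close>, so Hermitian matrices are self-adjoint for it and the spectral theorem for real
  Euclidean spaces applies to them.\<close>

definition cinner :: "complex^'n \<Rightarrow> complex^'n \<Rightarrow> complex" where
  "cinner u v = (\<Sum>i\<in>UNIV. cnj (u $ i) * v $ i)"

lemma Re_cinner: "Re (cinner u v) = inner u v"
  by (simp add: cinner_def inner_vec_def inner_complex_def)

lemma cnj_cinner: "cnj (cinner u v) = cinner v u"
  by (simp add: cinner_def mult.commute)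

lemma cinner_matrix_vector_mult: "cinner u (M *v v) = cinner (cadj M *v u) v"
proof -
  have "cinner u (M *v v) = (\<Sum>i\<in>UNIV. \<Sum>j\<in>UNIV. cnj (u $ i) * (M $ i $ j * v $ j))"
    by (simp add: cinner_def matrix_vector_mult_def sum_distrib_left)
  also have "\<dots> = (\<Sum>j\<in>UNIV. \<Sum>i\<in>UNIV. cnj (u $ i) * (M $ i $ j * v $ j))"
    by (rule sum.swap)
  also have "\<dots> = cinner (cadj M *v u) v"
    by (simp add: cinner_def matrix_vector_mult_def sum_distrib_right sum_distrib_left mult_ac)
  finally show ?thesis .
qed

lemma inner_matrix_vector_mult: "inner u (M *v v) = inner (cadj M *v u) v"
  by (metis Re_cinner cinner_matrix_vector_mult)

lemma inner_cadj_mult_self: "inner v ((cadj r ** r) *v v) = (norm (r *v v))\<^sup>2"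
  by (metis cadj_cadj inner_matrix_vector_mult matrix_vector_mul_assoc power2_norm_eq_inner)

lemma psd_iff: "psd M \<longleftrightarrow> cadj M = M \<and> (\<forall>v. 0 \<le> inner v (M *v v))"
proof -
  have "qform M v \<in> \<real>" if "cadj M = M" for v
  proof -
    have "cnj (qform M v) = qform M v"
      by (metis cinner_matrix_vector_mult cnj_cinner qform_def cinner_def that)
    then show ?thesis by (metis Reals_cnj_iff)
  qed
  then show ?thesis
    unfolding psd_def by (auto simp: Re_cinner[symmetric] cinner_def qform_def)
qed

lemma psd_hermitian: "psd M \<Longrightarrow> cadj M = M"
  unfolding psd_iff by blast

lemma psd_inner_nonneg: "psd M \<Longrightarrow> 0 \<le> inner v (M *v v)"
  unfolding psd_iff by blast

lemma psd_cadj_mult_self: "psd (cadj r ** r)"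
  unfolding psd_iff by (simp add: cadj_mult inner_cadj_mult_self)

lemma psd_sandwich: "psd P \<Longrightarrow> psd (cadj r ** P ** r)"
  unfolding psd_iff
  by (metis cadj_cadj cadj_mult inner_matrix_vector_mult matrix_mul_assoc matrix_vector_mul_assoc)

lemma psd_add: "psd P \<Longrightarrow> psd Q \<Longrightarrow> psd (P + Q)"
  unfolding psd_iff by (auto simp: cadj_add matrix_vector_mult_add_rdistrib inner_add_right)

lemma psd_scaleR: "psd P \<Longrightarrow> 0 \<le> c \<Longrightarrow> psd (c *\<^sub>R P)"
  unfolding psd_iff by (auto simp: cadj_scaleR scaleR_matrix_vector_mult)

lemma psd_zero: "psd 0"
  unfolding psd_iff by simp

lemma psd_one: "psd (mat 1)"
  using psd_cadj_mult_self[of "mat 1"] by simp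

lemma psd_eigenvalue_nonneg:
  assumes "psd M" and "M *v e = \<mu> *\<^sub>R e" and "e \<noteq> 0"
  shows "0 \<le> \<mu>"
proof -
  have "0 \<le> inner e (M *v e)" using assms(1) by (rule psd_inner_nonneg)
  also have "inner e (M *v e) = \<mu> * (norm e)\<^sup>2" using assms(2) by (simp add: power2_norm_eq_inner)
  finally show ?thesis using assms(3) by (simp add: zero_le_mult_iff)
qed

lemma cadj_mult_self_eq_zeroD: "cadj Y ** Y = 0 \<Longrightarrow> (Y :: complex^'n^'m) = 0"
  by (metis inner_cadj_mult_self matrix_eq matrix_vector_mult_0 inner_zero_right
        power_eq_0_iff norm_eq_zero matrix_vector_mult_0_right)

section \<open>The spectral theorem\<close>

lemma subspace_le_span_insert_orthogonal:
  assumes S: "subspace S" and v0: "v0 \<in> S" "inner v0 v0 = 1"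
    and E: "span E = {w \<in> S. inner w v0 = 0}"
  shows "S \<subseteq> span (insert v0 E)"
proof
  fix s assume "s \<in> S"
  then have "s - inner s v0 *\<^sub>R v0 \<in> span E"
    unfolding E using v0 S by (simp add: subspace_diff subspace_scale inner_diff_left)
  then have "s - inner s v0 *\<^sub>R v0 \<in> span (insert v0 E)"
    using span_mono[of E "insert v0 E"] by auto
  then show "s \<in> span (insert v0 E)"
    by (metis diff_add_cancel insertI1 span_add span_base span_scale)
qed

lemma linear_coeff_zero_if_quadratic_nonpos:
  fixes c D :: real
  assumes "\<And>s. 2 * s * c + s\<^sup>2 * D \<le> 0"
  shows "c = 0"
proof (rule ccontr)
  assume "c \<noteq> 0"
  define r where "r = \<bar>D\<bar> + 1"
  have "r > 0" unfolding r_def by simp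
  have "(2 * (c / r) * c + (c / r)\<^sup>2 * D) * r\<^sup>2 \<le> 0"
    using assms[of "c / r"] by (simp add: mult_nonpos_nonneg)
  moreover have "(2 * (c / r) * c + (c / r)\<^sup>2 * D) * r\<^sup>2 = c\<^sup>2 * (2 * r + D)"
    using \<open>r > 0\<close> by (simp add: field_simps power2_eq_square)
  moreover have "c\<^sup>2 * (2 * r + D) > 0"
    using \<open>c \<noteq> 0\<close> unfolding r_def by (intro mult_pos_pos) (auto simp: abs_if)
  ultimately show False by linarith
qed

context
  fixes T :: "'a::euclidean_space \<Rightarrow> 'a"
  assumes lin: "linear T" and self_adjoint: "\<And>u v. inner u (T v) = inner (T u) v"
begin

text \<open>First variation of the Rayleigh quotient at a maximiser \<open>v\<^sub>0\<close>, in a direction \<open>w \<bottom> v\<^sub>0\<close>.\<close>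

lemma rayleigh_maximiser_orthogonal:
  assumes S: "subspace S" and v0: "v0 \<in> S" "inner v0 v0 = 1"
    and max: "\<And>v. v \<in> S \<Longrightarrow> norm v = 1 \<Longrightarrow> inner v (T v) \<le> inner v0 (T v0)"
    and w: "w \<in> S" "inner w v0 = 0"
  shows "inner w (T v0) = 0"
proof (rule linear_coeff_zero_if_quadratic_nonpos)
  fix s :: real
  define lam where "lam = inner v0 (T v0)"
  define v where "v = v0 + s *\<^sub>R w"
  have "v \<in> S" unfolding v_def using w v0 S by (simp add: subspace_add subspace_scale)
  have vv: "inner v v = 1 + s\<^sup>2 * inner w w"
    unfolding v_def using v0(2) w(2)
    by (simp add: inner_add_left inner_add_right inner_commute power2_eq_square)
  then have "inner v v > 0" by (simp add: add_pos_nonneg)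
  then have "inner (v /\<^sub>R norm v) (T (v /\<^sub>R norm v)) \<le> lam"
    unfolding lam_def using \<open>v \<in> S\<close> S by (intro max) (auto simp: subspace_scale)
  then have "inner v (T v) / (norm v)\<^sup>2 \<le> lam"
    using linear_scale[OF lin] by (simp add: power2_eq_square divide_inverse mult_ac)
  then have "inner v (T v) \<le> lam * inner v v"
    using \<open>inner v v > 0\<close> by (simp add: divide_le_eq power2_norm_eq_inner)
  moreover have "inner v (T v) = lam + 2 * s * inner w (T v0) + s\<^sup>2 * inner w (T w)"
    using self_adjoint[of v0 w] linear_add[OF lin] linear_scale[OF lin]
    unfolding v_def lam_def
    by (simp add: inner_add_left inner_add_right inner_commute power2_eq_square algebra_simps)
  ultimately show "2 * s * inner w (T v0) + s\<^sup>2 * (inner w (T w) - lam * inner w w) \<le> 0"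
    unfolding vv by (simp add: algebra_simps)
qed

lemma self_adjoint_unit_eigenvector:
  assumes S: "subspace S" and inv: "\<forall>x\<in>S. T x \<in> S" and nontriv: "S \<noteq> {0}"
  obtains v0 lam where "v0 \<in> S" "inner v0 v0 = 1" "T v0 = lam *\<^sub>R v0"
proof -
  define K where "K = S \<inter> sphere 0 1"
  obtain x where "x \<in> S" "x \<noteq> 0" using nontriv S subspace_0 by blast
  then have "x /\<^sub>R norm x \<in> K" unfolding K_def using S by (auto simp: subspace_scale)
  moreover have "compact K"
    unfolding K_def by (intro closed_Int_compact closed_subspace S compact_sphere)
  moreover have "continuous_on K (\<lambda>v. inner v (T v))"
    using lin by (intro continuous_intros linear_continuous_on) (simp add: linear_conv_bounded_linear)
  ultimately obtain v0 where "v0 \<in> K" and v0_max: "\<forall>y\<in>K. inner y (T y) \<le> inner v0 (T v0)"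
    using continuous_attains_sup[of K "\<lambda>v. inner v (T v)"] by blast
  define lam where "lam = inner v0 (T v0)"
  have v0S: "v0 \<in> S" and v0_unit: "inner v0 v0 = 1"
    using \<open>v0 \<in> K\<close> by (auto simp: K_def simp flip: power2_norm_eq_inner)
  have orth: "inner w (T v0) = 0" if "w \<in> S" "inner w v0 = 0" for w
    using S v0S v0_unit _ that by (rule rayleigh_maximiser_orthogonal) (use v0_max K_def in auto)
  define u where "u = T v0 - lam *\<^sub>R v0"
  have "u \<in> S" unfolding u_def using inv v0S S by (simp add: subspace_diff subspace_scale)
  moreover have u_orth: "inner u v0 = 0"
    unfolding u_def lam_def using v0_unit by (simp add: inner_diff_left inner_commute[of "T v0"])
  ultimately have "inner u (T v0) = 0" by (rule orth)
  with u_orth have "inner u u = 0" unfolding u_def by (simp add: inner_diff_right)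
  then have "T v0 = lam *\<^sub>R v0" unfolding u_def by simp
  with v0S v0_unit show ?thesis by (rule that)
qed

lemma self_adjoint_eigenbasis:
  assumes "subspace S" and "\<forall>x\<in>S. T x \<in> S"
  shows "\<exists>E. finite E \<and> E \<subseteq> S \<and> span E = S \<and> (\<forall>e\<in>E. \<exists>l. T e = l *\<^sub>R e)"
  using assms
proof (induction "dim S" arbitrary: S rule: less_induct)
  case less
  note S = less.prems(1) and inv = less.prems(2)
  show ?case
  proof (cases "S = {0}")
    case True
    then show ?thesis by (intro exI[of _ "{}"]) auto
  next
    case False
    then obtain v0 lam where v0S: "v0 \<in> S" and v0_unit: "inner v0 v0 = 1"
      and eig: "T v0 = lam *\<^sub>R v0"
      by (rule self_adjoint_unit_eigenvector[OF S inv])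
    define S' where "S' = {w \<in> S. inner w v0 = 0}"
    have "subspace S'"
      unfolding S'_def subspace_def using S
      by (auto simp: subspace_0 subspace_add subspace_scale inner_add_left)
    moreover have "\<forall>w\<in>S'. T w \<in> S'"
      unfolding S'_def using inv eig self_adjoint by (auto simp flip: self_adjoint)
    moreover have "dim S' < dim S"
    proof (rule dim_psubset)
      have "v0 \<notin> S'" unfolding S'_def using v0_unit by auto
      moreover have "S' \<subseteq> S" unfolding S'_def by auto
      ultimately have "S' \<subset> S" using v0S by blast
      then show "span S' \<subset> span S"
        using \<open>subspace S'\<close> S by (metis span_eq_iff)
    qed
    ultimately obtain E' where E': "finite E'" "E' \<subseteq> S'" "span E' = S'"
      "\<forall>e\<in>E'. \<exists>l. T e = l *\<^sub>R e"
      using less.hyps by blast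
    have "S \<subseteq> span (insert v0 E')"
      using subspace_le_span_insert_orthogonal[OF S v0S v0_unit] E'(3) unfolding S'_def by blast
    moreover have "span (insert v0 E') \<subseteq> S"
      using E' v0S S unfolding S'_def by (intro span_minimal) auto
    ultimately show ?thesis
      using E' eig v0S unfolding S'_def by (intro exI[of _ "insert v0 E'"]) auto
  qed
qed

end

lemma hermitian_eigenbasis:
  fixes M :: "complex^'n^'n"
  assumes "cadj M = M"
  obtains E lam where "finite E" "span E = UNIV" "\<forall>e\<in>E. M *v e = lam e *\<^sub>R e"
proof -
  obtain E where "finite E" "span E = UNIV" "\<forall>e\<in>E. \<exists>l. M *v e = l *\<^sub>R e"
    using self_adjoint_eigenbasis[of "(*v) M" UNIV] assms
    by (auto simp: inner_matrix_vector_mult)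
  then show ?thesis using that by metis
qed

section \<open>Functional calculus\<close>

definition fun_calc :: "complex^'n^'n \<Rightarrow> (real \<Rightarrow> real) \<Rightarrow> complex^'n^'n \<Rightarrow> bool" where
  "fun_calc M f X \<longleftrightarrow> (\<forall>e \<mu>. M *v e = \<mu> *\<^sub>R e \<longrightarrow> X *v e = f \<mu> *\<^sub>R e)"

lemma fun_calc_eigenvector: "fun_calc M f X \<Longrightarrow> M *v e = \<mu> *\<^sub>R e \<Longrightarrow> X *v e = f \<mu> *\<^sub>R e"
  unfolding fun_calc_def by blast

lemma fun_calc_intro: "(\<And>e \<mu>. M *v e = \<mu> *\<^sub>R e \<Longrightarrow> X *v e = f \<mu> *\<^sub>R e) \<Longrightarrow> fun_calc M f X"
  unfolding fun_calc_def by blast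

lemma fun_calc_add:
  assumes "fun_calc M f X" and "fun_calc M g Y"
  shows "fun_calc M (\<lambda>\<mu>. f \<mu> + g \<mu>) (X + Y)"
proof (rule fun_calc_intro)
  fix e \<mu> assume eig: "M *v e = \<mu> *\<^sub>R e"
  show "(X + Y) *v e = (f \<mu> + g \<mu>) *\<^sub>R e"
    using fun_calc_eigenvector[OF assms(1) eig] fun_calc_eigenvector[OF assms(2) eig]
    by (simp add: matrix_vector_mult_add_rdistrib scaleR_add_left)
qed

lemma fun_calc_diff:
  assumes "fun_calc M f X" and "fun_calc M g Y"
  shows "fun_calc M (\<lambda>\<mu>. f \<mu> - g \<mu>) (X - Y)"
proof (rule fun_calc_intro)
  fix e \<mu> assume eig: "M *v e = \<mu> *\<^sub>R e"
  show "(X - Y) *v e = (f \<mu> - g \<mu>) *\<^sub>R e"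
    using fun_calc_eigenvector[OF assms(1) eig] fun_calc_eigenvector[OF assms(2) eig]
    by (simp add: matrix_vector_mult_diff_rdistrib scaleR_diff_left)
qed

lemma fun_calc_scaleR:
  assumes "fun_calc M f X"
  shows "fun_calc M (\<lambda>\<mu>. c * f \<mu>) (c *\<^sub>R X)"
proof (rule fun_calc_intro)
  fix e \<mu> assume eig: "M *v e = \<mu> *\<^sub>R e"
  show "(c *\<^sub>R X) *v e = (c * f \<mu>) *\<^sub>R e"
    using fun_calc_eigenvector[OF assms(1) eig] by (simp add: scaleR_matrix_vector_mult)
qed

lemma fun_calc_mult:
  assumes "fun_calc M f X" and "fun_calc M g Y"
  shows "fun_calc M (\<lambda>\<mu>. f \<mu> * g \<mu>) (X ** Y)"
proof (rule fun_calc_intro)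
  fix e \<mu> assume eig: "M *v e = \<mu> *\<^sub>R e"
  show "(X ** Y) *v e = (f \<mu> * g \<mu>) *\<^sub>R e"
    using fun_calc_eigenvector[OF assms(1) eig] fun_calc_eigenvector[OF assms(2) eig]
    by (simp add: matrix_vector_mul_assoc[symmetric] matrix_vector_mult_scaleR_right)
qed

lemma fun_calc_const: "fun_calc M (\<lambda>_. c) (mat (complex_of_real c))"
  unfolding fun_calc_def by (simp add: mat_of_real_mult_vec)

lemma fun_calc_one: "fun_calc M (\<lambda>_. 1) (mat 1)"
  unfolding fun_calc_def by simp

lemma fun_calc_self: "fun_calc M (\<lambda>\<mu>. \<mu>) M"
  unfolding fun_calc_def by simp

lemma fun_calc_unique:
  assumes "cadj M = M" and "fun_calc M f X" and "fun_calc M g Y"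
    and "\<And>\<mu> e. M *v e = \<mu> *\<^sub>R e \<Longrightarrow> e \<noteq> 0 \<Longrightarrow> f \<mu> = g \<mu>"
  shows "X = Y"
proof -
  obtain E lam where "finite E" and span: "span E = UNIV" and eig: "\<forall>e\<in>E. M *v e = lam e *\<^sub>R e"
    by (rule hermitian_eigenbasis[OF assms(1)])
  show ?thesis
  proof (rule matrix_eq_on_spanning[OF span])
    fix e assume "e \<in> E"
    with eig have e: "M *v e = lam e *\<^sub>R e" by blast
    show "X *v e = Y *v e"
    proof (cases "e = 0")
      case False
      then have "f (lam e) = g (lam e)" using assms(4) e by blast
      then show ?thesis
        using fun_calc_eigenvector[OF assms(2) e] fun_calc_eigenvector[OF assms(3) e] by simp
    qed simp
  qed
qed

lemma fun_calc_commute: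
  assumes "cadj M = M" and "fun_calc M f X" and "fun_calc M g Y"
  shows "X ** Y = Y ** X"
  by (rule fun_calc_unique[OF assms(1) fun_calc_mult[OF assms(2,3)] fun_calc_mult[OF assms(3,2)]])
    (simp add: mult.commute)

lemma lagrange_interpolation:
  fixes f :: "real \<Rightarrow> real"
  assumes "finite L" and "\<mu> \<in> L"
  shows "(\<Sum>\<nu>\<in>L. f \<nu> / (\<Prod>\<nu>'\<in>L - {\<nu>}. \<nu> - \<nu>') * (\<Prod>\<nu>'\<in>L - {\<nu>}. \<mu> - \<nu>')) = f \<mu>"
    (is "sum ?l L = _")
proof -
  have "sum ?l L = ?l \<mu> + sum ?l (L - {\<mu>})"
    using assms by (rule sum.remove)
  also have "sum ?l (L - {\<mu>}) = 0"
  proof (rule sum.neutral, rule ballI)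
    fix \<nu> assume "\<nu> \<in> L - {\<mu>}"
    then have "(\<Prod>\<nu>'\<in>L - {\<nu>}. \<mu> - \<nu>') = 0"
      using assms by (intro prod_zero) auto
    then show "?l \<nu> = 0" by simp
  qed
  also have "?l \<mu> = f \<mu>"
    using assms by simp
  finally show ?thesis by simp
qed

definition fun_calc_in :: "(complex^'n^'n) set \<Rightarrow> complex^'n^'n \<Rightarrow> (real \<Rightarrow> real) \<Rightarrow> bool" where
  "fun_calc_in A M f \<longleftrightarrow> (\<exists>X\<in>A. cadj X = X \<and> fun_calc M f X)"

locale vn_algebra =
  fixes A :: "(complex^'n^'n) set"
  assumes vna: "is_vna A"
begin

lemma mat_mem: "mat c \<in> A"
  using vna unfolding is_vna_def by (metis matrix_mul_rid)

lemma add_mem: "x \<in> A \<Longrightarrow> y \<in> A \<Longrightarrow> x + y \<in> A"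
  using vna unfolding is_vna_def by blast

lemma mult_mem: "x \<in> A \<Longrightarrow> y \<in> A \<Longrightarrow> x ** y \<in> A"
  using vna unfolding is_vna_def by blast

lemma mat_mult_mem: "x \<in> A \<Longrightarrow> mat c ** x \<in> A"
  using vna unfolding is_vna_def by blast

lemma cadj_mem: "x \<in> A \<Longrightarrow> cadj x \<in> A"
  using vna unfolding is_vna_def by blast

lemma scaleR_mem: "x \<in> A \<Longrightarrow> c *\<^sub>R x \<in> A"
  by (metis mat_of_real_mult mat_mult_mem)

lemma diff_mem: "x \<in> A \<Longrightarrow> y \<in> A \<Longrightarrow> x - y \<in> A"
  using add_mem[of x "(-1) *\<^sub>R y"] scaleR_mem[of y "-1"] by simp

lemma zero_mem: "0 \<in> A"
  using mat_mem[of 0] by simp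

lemma subspace: "subspace A"
  unfolding subspace_def using zero_mem add_mem scaleR_mem by blast

context
  fixes M assumes M_mem: "M \<in> A" and M_herm: "cadj M = M"
begin

lemma fun_calc_in_const: "fun_calc_in A M (\<lambda>_. c)"
  unfolding fun_calc_in_def
  by (intro bexI[of _ "mat (complex_of_real c)"] conjI fun_calc_const mat_mem) simp

lemma fun_calc_in_self: "fun_calc_in A M (\<lambda>\<mu>. \<mu>)"
  unfolding fun_calc_in_def using M_mem M_herm fun_calc_self by blast

lemma fun_calc_in_add:
  assumes "fun_calc_in A M f" and "fun_calc_in A M g"
  shows "fun_calc_in A M (\<lambda>\<mu>. f \<mu> + g \<mu>)"
proof -
  obtain X Y where "X \<in> A" "cadj X = X" "fun_calc M f X" "Y \<in> A" "cadj Y = Y" "fun_calc M g Y"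
    using assms unfolding fun_calc_in_def by blast
  then show ?thesis
    unfolding fun_calc_in_def by (intro bexI[of _ "X + Y"] conjI fun_calc_add add_mem) (simp_all add: cadj_add)
qed

lemma fun_calc_in_scale:
  assumes "fun_calc_in A M f"
  shows "fun_calc_in A M (\<lambda>\<mu>. c * f \<mu>)"
proof -
  obtain X where "X \<in> A" "cadj X = X" "fun_calc M f X"
    using assms unfolding fun_calc_in_def by blast
  then show ?thesis
    unfolding fun_calc_in_def
    by (intro bexI[of _ "c *\<^sub>R X"] conjI fun_calc_scaleR scaleR_mem) (simp_all add: cadj_scaleR)
qed

lemma fun_calc_in_mult:
  assumes "fun_calc_in A M f" and "fun_calc_in A M g"
  shows "fun_calc_in A M (\<lambda>\<mu>. f \<mu> * g \<mu>)"
proof -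
  obtain X Y where X: "X \<in> A" "cadj X = X" "fun_calc M f X"
    and Y: "Y \<in> A" "cadj Y = Y" "fun_calc M g Y"
    using assms unfolding fun_calc_in_def by blast
  then have "cadj (X ** Y) = X ** Y"
    using fun_calc_commute[OF M_herm X(3) Y(3)] by (simp add: cadj_mult)
  then show ?thesis
    unfolding fun_calc_in_def using X Y by (blast intro: mult_mem fun_calc_mult)
qed

lemma fun_calc_in_sum:
  "finite S \<Longrightarrow> (\<And>\<nu>. \<nu> \<in> S \<Longrightarrow> fun_calc_in A M (f \<nu>)) \<Longrightarrow> fun_calc_in A M (\<lambda>\<mu>. \<Sum>\<nu>\<in>S. f \<nu> \<mu>)"
proof (induction S rule: finite_induct)
  case (insert \<nu> S)
  then show ?case using fun_calc_in_add[of "f \<nu>"] by simp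
qed (simp add: fun_calc_in_const)

lemma fun_calc_in_prod:
  "finite S \<Longrightarrow> (\<And>\<nu>. \<nu> \<in> S \<Longrightarrow> fun_calc_in A M (f \<nu>)) \<Longrightarrow> fun_calc_in A M (\<lambda>\<mu>. \<Prod>\<nu>\<in>S. f \<nu> \<mu>)"
proof (induction S rule: finite_induct)
  case (insert \<nu> S)
  then show ?case using fun_calc_in_mult[of "f \<nu>"] by simp
qed (simp add: fun_calc_in_const)

lemma fun_calc_in_vanishing:
  "finite L \<Longrightarrow> fun_calc_in A M (\<lambda>\<mu>. \<Prod>\<nu>\<in>L. \<mu> - \<nu>)"
  using fun_calc_in_add[OF fun_calc_in_self fun_calc_in_const, of "- _"]
  by (intro fun_calc_in_prod) simp_all

end

end

interpretation full: vn_algebra UNIV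
  by unfold_locales (simp add: is_vna_def)

text \<open>The polynomial vanishing on the eigenvalues of the basis annihilates the matrix.\<close>

lemma eigenvalue_in_eigenbasis:
  fixes M :: "complex^'n^'n"
  assumes herm: "cadj M = M" and E: "finite E" "span E = UNIV" "\<forall>e\<in>E. M *v e = lam e *\<^sub>R e"
    and eig: "M *v v = \<mu> *\<^sub>R v" "v \<noteq> 0"
  shows "\<mu> \<in> lam ` E"
proof -
  let ?p = "\<lambda>\<mu>. \<Prod>\<nu>\<in>lam ` E. \<mu> - \<nu>"
  obtain Z where Z: "fun_calc M ?p Z"
    using full.fun_calc_in_vanishing[OF UNIV_I herm] E(1) unfolding fun_calc_in_def by blast
  have "Z = 0"
  proof (rule matrix_eq_on_spanning[OF E(2)])
    fix e assume "e \<in> E"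
    then have eig_e: "M *v e = lam e *\<^sub>R e" using E(3) by blast
    have "?p (lam e) = 0" using E(1) \<open>e \<in> E\<close> by (simp add: prod_zero_iff)
    then show "Z *v e = 0 *v e" using fun_calc_eigenvector[OF Z eig_e] by simp
  qed
  then have "?p \<mu> *\<^sub>R v = 0" using fun_calc_eigenvector[OF Z eig(1)] by simp
  then show ?thesis using E(1) eig(2) by (simp add: prod_zero_iff)
qed

lemma (in vn_algebra) fun_calc_exists:
  assumes "M \<in> A" and "cadj M = M"
  obtains X where "X \<in> A" "cadj X = X" "fun_calc M f X"
proof -
  obtain E lam where E: "finite E" "span E = UNIV" "\<forall>e\<in>E. M *v e = lam e *\<^sub>R e"
    by (rule hermitian_eigenbasis[OF assms(2)])
  define L where "L = lam ` E"
  have "finite L" unfolding L_def using E(1) by simp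
  define l where "l \<nu> \<mu> = f \<nu> / (\<Prod>\<nu>'\<in>L - {\<nu>}. \<nu> - \<nu>') * (\<Prod>\<nu>'\<in>L - {\<nu>}. \<mu> - \<nu>')"
    for \<nu> \<mu>
  have "fun_calc_in A M (l \<nu>)" for \<nu>
    unfolding l_def using assms \<open>finite L\<close> by (intro fun_calc_in_scale fun_calc_in_vanishing) auto
  then have "fun_calc_in A M (\<lambda>\<mu>. \<Sum>\<nu>\<in>L. l \<nu> \<mu>)"
    using assms \<open>finite L\<close> by (intro fun_calc_in_sum)
  then obtain X where X: "X \<in> A" "cadj X = X" "fun_calc M (\<lambda>\<mu>. \<Sum>\<nu>\<in>L. l \<nu> \<mu>) X"
    unfolding fun_calc_in_def by blast
  have "fun_calc M f X"
    unfolding fun_calc_def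
  proof (intro allI impI)
    fix e \<mu> assume eig: "M *v e = \<mu> *\<^sub>R e"
    show "X *v e = f \<mu> *\<^sub>R e"
    proof (cases "e = 0")
      case False
      then have "\<mu> \<in> L" unfolding L_def by (rule eigenvalue_in_eigenbasis[OF assms(2) E eig])
      then have "(\<Sum>\<nu>\<in>L. l \<nu> \<mu>) = f \<mu>"
        unfolding l_def by (rule lagrange_interpolation[OF \<open>finite L\<close>])
      then show ?thesis using fun_calc_eigenvector[OF X(3) eig] by simp
    qed simp
  qed
  with X that show ?thesis by blast
qed

section \<open>Operator norm, square roots and range projections\<close>

lemma opnorm_le: "norm (M *v v) \<le> opnorm M * norm (v :: complex^'n)"
  unfolding opnorm_def by (rule onorm) simp

lemma opnorm_le_bound: "(\<And>v. norm (M *v v) \<le> b * norm (v :: complex^'n)) \<Longrightarrow> opnorm M \<le> b"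
  unfolding opnorm_def by (rule onorm_le)

lemma opnorm_nonneg: "0 \<le> opnorm (M :: complex^'n^'n)"
  unfolding opnorm_def by (rule onorm_pos_le) simp

lemma opnorm_scaleR: "opnorm (c *\<^sub>R M) = \<bar>c\<bar> * opnorm (M :: complex^'n^'n)"
  unfolding opnorm_def scaleR_matrix_vector_mult by (rule onorm_scaleR) simp

lemma opnorm_zero [simp]: "opnorm (0 :: complex^'n^'n) = 0"
  by (simp add: opnorm_def onorm_zero)

text \<open>\<^const>\<open>norm\<close> on matrices is the Frobenius norm.\<close>

lemma opnorm_le_norm: "opnorm (w :: complex^'n^'n) \<le> norm w"
proof (rule opnorm_le_bound)
  fix v :: "complex^'n"
  have row: "norm ((w *v v) $ i) \<le> norm (w $ i) * norm v" for i
  proof -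
    have "norm ((w *v v) $ i) \<le> (\<Sum>j\<in>UNIV. \<bar>norm (w $ i $ j)\<bar> * \<bar>norm (v $ j)\<bar>)"
      unfolding matrix_vector_mult_def by (simp add: norm_mult sum_norm_le)
    also have "\<dots> \<le> norm (w $ i) * norm v"
      unfolding norm_vec_def by (rule L2_set_mult_ineq)
    finally show ?thesis .
  qed
  have "norm (w *v v) \<le> L2_set (\<lambda>i. norm (w $ i) * norm v) UNIV"
    unfolding norm_vec_def[of "w *v v"] by (rule L2_set_mono) (auto simp: row)
  also have "\<dots> = norm w * norm v"
    by (simp add: norm_vec_def L2_set_left_distrib)
  finally show "norm (w *v v) \<le> norm w * norm v" .
qed

lemma psd_opnorm_minus: "psd X \<Longrightarrow> psd (mat (complex_of_real (opnorm X)) - X)"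
  unfolding psd_iff
proof (intro conjI allI)
  assume "cadj X = X \<and> (\<forall>v. 0 \<le> inner v (X *v v))"
  then show "cadj (mat (complex_of_real (opnorm X)) - X) = mat (complex_of_real (opnorm X)) - X"
    by (simp add: cadj_diff)
  fix v
  have "inner v (X *v v) \<le> norm v * norm (X *v v)" by (rule norm_cauchy_schwarz)
  also have "\<dots> \<le> norm v * (opnorm X * norm v)" using opnorm_le[of X v] by (simp add: mult_left_mono)
  finally show "0 \<le> inner v ((mat (complex_of_real (opnorm X)) - X) *v v)"
    by (simp add: matrix_vector_mult_diff_rdistrib inner_diff_right mat_of_real_mult_vec
        power2_norm_eq_inner[symmetric] power2_eq_square mult_ac)
qed

lemma norm_le_if_psd_one_minus_cadj_mult:
  assumes "psd (mat 1 - cadj a ** a)"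
  shows "norm (a *v u) \<le> norm (u :: complex^'n)"
proof -
  have "0 \<le> inner u ((mat 1 - cadj a ** a) *v u)" using assms by (rule psd_inner_nonneg)
  also have "\<dots> = (norm u)\<^sup>2 - (norm (a *v u))\<^sup>2"
    by (simp add: matrix_vector_mult_diff_rdistrib inner_diff_right inner_cadj_mult_self dot_square_norm)
  finally show ?thesis by (simp add: abs_le_square_iff)
qed

lemma psd_sq_bound_minus_mult_cadj:
  fixes a :: "complex^'n^'n"
  assumes k: "0 \<le> k" and bound: "\<And>u. norm (a *v u) \<le> k * norm u"
  shows "psd (mat (complex_of_real (k\<^sup>2)) - a ** cadj a)"
  unfolding psd_iff
proof (intro conjI allI)
  show "cadj (mat (complex_of_real (k\<^sup>2)) - a ** cadj a) = mat (complex_of_real (k\<^sup>2)) - a ** cadj a"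
    by (simp add: cadj_diff cadj_mult)
  fix v
  have aa: "inner v ((a ** cadj a) *v v) = (norm (cadj a *v v))\<^sup>2"
    using inner_cadj_mult_self[of v "cadj a"] by simp
  have "(norm (cadj a *v v))\<^sup>2 = inner v (a *v (cadj a *v v))"
    using aa by (simp add: matrix_vector_mul_assoc)
  also have "\<dots> \<le> norm v * norm (a *v (cadj a *v v))" by (rule norm_cauchy_schwarz)
  also have "\<dots> \<le> norm v * (k * norm (cadj a *v v))" using bound by (simp add: mult_left_mono)
  finally have "norm (cadj a *v v) * norm (cadj a *v v) \<le> (k * norm v) * norm (cadj a *v v)"
    by (simp add: power2_eq_square mult_ac)
  then have "norm (cadj a *v v) \<le> k * norm v"
    using k by (auto simp: mult_le_cancel_right)
  then have "(norm (cadj a *v v))\<^sup>2 \<le> (k * norm v)\<^sup>2" by (simp add: power_mono)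
  then show "0 \<le> inner v ((mat (complex_of_real (k\<^sup>2)) - a ** cadj a) *v v)"
    using aa by (simp add: matrix_vector_mult_diff_rdistrib inner_diff_right mat_of_real_mult_vec
        power2_norm_eq_inner power_mult_distrib del: of_real_power)
qed

context vn_algebra
begin

lemma psd_sqrt_exists:
  assumes "M \<in> A" and psd: "psd M"
  obtains s where "s \<in> A" "psd s" "s ** s = M" "fun_calc M sqrt s"
proof -
  have herm: "cadj M = M" using psd by (rule psd_hermitian)
  have nonneg: "0 \<le> \<mu>" if "M *v e = \<mu> *\<^sub>R e" "e \<noteq> 0" for \<mu> e
    using psd_eigenvalue_nonneg[OF psd that] .
  obtain s where s: "s \<in> A" "cadj s = s" "fun_calc M sqrt s"
    by (rule fun_calc_exists[OF assms(1) herm])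
  obtain r where r: "cadj r = r" "fun_calc M (\<lambda>\<mu>. sqrt (sqrt \<mu>)) r"
    by (rule fun_calc_exists[OF assms(1) herm])
  have "s ** s = M"
    by (rule fun_calc_unique[OF herm fun_calc_mult[OF s(3) s(3)] fun_calc_self]) (simp add: nonneg)
  moreover have "r ** r = s"
    by (rule fun_calc_unique[OF herm fun_calc_mult[OF r(2) r(2)] s(3)]) (simp add: nonneg)
  then have "psd s" using psd_cadj_mult_self[of r] r(1) by simp
  ultimately show ?thesis using s that by blast
qed

end

lemma psd_sqrt_unique:
  assumes psd: "psd h" and sq: "h ** h = M" and s: "fun_calc M sqrt s"
  shows "h = s"
proof -
  obtain E lam where "finite E" and span: "span E = UNIV" and eig: "\<forall>e\<in>E. h *v e = lam e *\<^sub>R e"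
    by (rule hermitian_eigenbasis[OF psd_hermitian[OF psd]])
  show ?thesis
  proof (rule matrix_eq_on_spanning[OF span])
    fix e assume "e \<in> E"
    then have he: "h *v e = lam e *\<^sub>R e" using eig by blast
    show "h *v e = s *v e"
    proof (cases "e = 0")
      case False
      have "M *v e = (lam e * lam e) *\<^sub>R e"
        using he unfolding sq[symmetric]
        by (simp add: matrix_vector_mul_assoc[symmetric] matrix_vector_mult_scaleR_right)
      then have "s *v e = sqrt (lam e * lam e) *\<^sub>R e" by (rule fun_calc_eigenvector[OF s])
      then show ?thesis using he psd_eigenvalue_nonneg[OF psd he False] by simp
    qed simp
  qed
qed

lemma absm_eqI:
  assumes "psd h" and "h ** h = cadj x ** x"
  shows "absm x = h"
proof -
  obtain s where "psd s" "s ** s = cadj x ** x" "fun_calc (cadj x ** x) sqrt s"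
    using full.psd_sqrt_exists[OF UNIV_I psd_cadj_mult_self] by blast
  then have "\<exists>!h. psd h \<and> h ** h = cadj x ** x" using psd_sqrt_unique by blast
  then show ?thesis unfolding absm_def using assms by (blast intro: the1_equality)
qed

lemma (in vn_algebra) absm_sqrt_in_algebra:
  assumes "z \<in> A"
  shows "absm z \<in> A \<and> psd (absm z) \<and> absm z ** absm z = cadj z ** z
    \<and> fun_calc (cadj z ** z) sqrt (absm z)"
proof -
  obtain s where "s \<in> A" "psd s" "s ** s = cadj z ** z" "fun_calc (cadj z ** z) sqrt s"
    using psd_sqrt_exists[OF mult_mem[OF cadj_mem[OF assms] assms] psd_cadj_mult_self] by blast
  moreover have "absm z = s" using calculation by (intro absm_eqI) auto
  ultimately show ?thesis by simp
qed

lemma (in vn_algebra) absm_mem: "z \<in> A \<Longrightarrow> absm z \<in> A"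
  using absm_sqrt_in_algebra by blast

lemma psd_absm: "psd (absm z)"
  using full.absm_sqrt_in_algebra by blast

lemma absm_mult_self: "absm z ** absm z = cadj z ** z"
  using full.absm_sqrt_in_algebra by blast

lemma fun_calc_absm: "fun_calc (cadj z ** z) sqrt (absm z)"
  using full.absm_sqrt_in_algebra by blast

lemma absm_scaleR: "0 \<le> c \<Longrightarrow> absm (c *\<^sub>R z) = c *\<^sub>R absm z"
  by (rule absm_eqI)
    (simp_all add: psd_scaleR psd_absm absm_mult_self cadj_scaleR matrix_mul_scaleR_left
      matrix_mul_scaleR_right)

lemma psd_scaled_minus_square:
  assumes psd: "psd X" and le: "psd (mat (complex_of_real c) - X)"
  shows "psd (c *\<^sub>R X - X ** X)"
proof -
  have herm: "cadj X = X" using psd by (rule psd_hermitian)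
  obtain s where s: "psd s" "fun_calc X sqrt s"
    using full.psd_sqrt_exists[OF UNIV_I psd] by blast
  have "cadj s ** (mat (complex_of_real c) - X) ** s = c *\<^sub>R X - X ** X"
    unfolding psd_hermitian[OF s(1)]
    by (rule fun_calc_unique[OF herm
          fun_calc_mult[OF fun_calc_mult[OF s(2) fun_calc_diff[OF fun_calc_const fun_calc_self]] s(2)]
          fun_calc_diff[OF fun_calc_scaleR[OF fun_calc_self] fun_calc_mult[OF fun_calc_self fun_calc_self]]])
      (auto dest: psd_eigenvalue_nonneg[OF psd] simp: algebra_simps)
  then show ?thesis using psd_sandwich[OF le, of s] by simp
qed

lemma orthogonal_projection_unique:
  fixes P Q :: "complex^'n^'n"
  assumes P: "P ** P = P" "cadj P = P" and Q: "Q ** Q = Q" "cadj Q = Q"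
    and range: "range ((*v) P) = range ((*v) Q)"
  shows "P = Q"
proof -
  have fixes_range: "R *v (S *v v) = S *v v"
    if idem: "R ** R = R" and sub: "range ((*v) S) \<subseteq> range ((*v) R)" for R S :: "complex^'n^'n" and v
  proof -
    obtain u where "S *v v = R *v u" using sub by blast
    then show ?thesis using idem by (simp add: matrix_vector_mul_assoc)
  qed
  have QP: "Q ** P = P" and PQ: "P ** Q = Q"
    using fixes_range[OF Q(1)] fixes_range[OF P(1)] range
    by (simp_all add: matrix_eq matrix_vector_mul_assoc[symmetric])
  have "P = cadj (Q ** P)" using QP P(2) by simp
  also have "\<dots> = P ** Q" using P(2) Q(2) by (simp add: cadj_mult)
  finally show ?thesis using PQ by simp
qed

lemma rproj_eqI:
  assumes "P ** P = P" and "cadj P = P" and "range ((*v) P) = range ((*v) x)"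
  shows "rproj x = P"
  unfolding rproj_def
proof (rule the_equality)
  show "P ** P = P \<and> cadj P = P \<and> range ((*v) P) = range ((*v) x)"
    using assms by blast
  fix Q assume Q: "Q ** Q = Q \<and> cadj Q = Q \<and> range ((*v) Q) = range ((*v) x)"
  show "Q = P"
  proof (rule orthogonal_projection_unique)
    show "Q ** Q = Q" "cadj Q = Q" using Q by blast+
    show "range ((*v) Q) = range ((*v) P)" using Q assms(3) by simp
  qed (fact assms)+
qed

text \<open>The range projection of \<open>x\<close> is the spectral projection of \<open>x x\<^sup>*\<close> onto its
  nonzero eigenvalues; pseudo-inverting \<open>x x\<^sup>*\<close> shows that it has the range of \<open>x\<close>.\<close>

lemma (in vn_algebra) rproj_projection_in_algebra:
  assumes "x \<in> A"
  shows "rproj x \<in> A \<and> rproj x ** rproj x = rproj x \<and> cadj (rproj x) = rproj x \<and> rproj x ** x = x"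
proof -
  define M where "M = x ** cadj x"
  have "M \<in> A" unfolding M_def using assms by (intro mult_mem cadj_mem)
  have herm: "cadj M = M" unfolding M_def by (simp add: cadj_mult)
  obtain P where P: "P \<in> A" "cadj P = P" "fun_calc M (\<lambda>\<mu>. if \<mu> = 0 then 0 else 1) P"
    by (rule fun_calc_exists[OF \<open>M \<in> A\<close> herm])
  obtain G where G: "fun_calc M (\<lambda>\<mu>. if \<mu> = 0 then 0 else 1 / \<mu>) G"
    by (rule fun_calc_exists[OF \<open>M \<in> A\<close> herm])
  have PP: "P ** P = P"
    by (rule fun_calc_unique[OF herm fun_calc_mult[OF P(3) P(3)] P(3)]) simp
  have PM: "P ** M = M"
    by (rule fun_calc_unique[OF herm fun_calc_mult[OF P(3) fun_calc_self] fun_calc_self]) simp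
  have MG: "M ** G = P"
    by (rule fun_calc_unique[OF herm fun_calc_mult[OF fun_calc_self G] P(3)]) simp
  define Y where "Y = (mat 1 - P) ** x"
  have "cadj (cadj Y) ** cadj Y = (mat 1 - P) ** M ** (mat 1 - P)"
    unfolding Y_def M_def by (simp add: cadj_mult cadj_diff P(2) matrix_mul_assoc)
  also have "\<dots> = 0" by (simp add: matrix_diff_rdistrib PM)
  finally have "Y = 0" using cadj_mult_self_eq_zeroD by fastforce
  then have Px: "P ** x = x" unfolding Y_def by (simp add: matrix_diff_rdistrib)
  have "range ((*v) P) = range ((*v) x)"
  proof (intro equalityI subsetI)
    fix w assume "w \<in> range ((*v) P)"
    then obtain v where "w = P *v v" by blast
    then have "w = x *v ((cadj x ** G) *v v)"
      unfolding MG[symmetric] M_def by (simp add: matrix_vector_mul_assoc matrix_mul_assoc)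
    then show "w \<in> range ((*v) x)" by blast
  next
    fix w assume "w \<in> range ((*v) x)"
    then obtain v where "w = x *v v" by blast
    then have "w = P *v (x *v v)" using Px by (simp add: matrix_vector_mul_assoc)
    then show "w \<in> range ((*v) P)" by blast
  qed
  then have "rproj x = P" by (rule rproj_eqI[OF PP P(2)])
  then show ?thesis using P PP Px by simp
qed

lemma (in vn_algebra) rproj_mem: "x \<in> A \<Longrightarrow> rproj x \<in> A"
  using rproj_projection_in_algebra by blast

lemma rproj_idem: "rproj x ** rproj x = rproj x"
  using full.rproj_projection_in_algebra by blast

lemma cadj_rproj: "cadj (rproj x) = rproj x"
  using full.rproj_projection_in_algebra by blast

lemma rproj_mult_self: "rproj x ** x = x"
  using full.rproj_projection_in_algebra by blast

section \<open>Traces and Schatten norms\<close>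

lemma psd_add_opnorm:
  assumes "cadj x = x"
  shows "psd (x + mat (complex_of_real (opnorm x)))"
  unfolding psd_iff
proof (intro conjI allI)
  show "cadj (x + mat (complex_of_real (opnorm x))) = x + mat (complex_of_real (opnorm x))"
    using assms by (simp add: cadj_add)
  fix v
  have "\<bar>inner v (x *v v)\<bar> \<le> norm v * norm (x *v v)" by (rule Cauchy_Schwarz_ineq2)
  also have "\<dots> \<le> norm v * (opnorm x * norm v)" using opnorm_le[of x v] by (simp add: mult_left_mono)
  finally have "- (opnorm x * (norm v)\<^sup>2) \<le> inner v (x *v v)" by (simp add: power2_eq_square mult_ac)
  then show "0 \<le> inner v ((x + mat (complex_of_real (opnorm x))) *v v)"
    by (simp add: matrix_vector_mult_add_rdistrib inner_add_right mat_of_real_mult_vec dot_square_norm)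
qed

lemma norm2_eq: "norm2 t z = sqrt (Re (t (cadj z ** z)))"
  unfolding norm2_def absm_mult_self ..

locale traced_algebra = vn_algebra A for A :: "(complex^'n^'n) set" +
  fixes tr :: "complex^'n^'n \<Rightarrow> complex"
  assumes trace: "is_trace A tr"
begin

lemma trace_add: "x \<in> A \<Longrightarrow> y \<in> A \<Longrightarrow> tr (x + y) = tr x + tr y"
  using trace unfolding is_trace_def clinear_fun_def by blast

lemma trace_mat_mult: "x \<in> A \<Longrightarrow> tr (mat c ** x) = c * tr x"
  using trace unfolding is_trace_def clinear_fun_def by blast

lemma trace_commute: "x \<in> A \<Longrightarrow> y \<in> A \<Longrightarrow> tr (x ** y) = tr (y ** x)"
  using trace unfolding is_trace_def by blast

lemma trace_psd_real: "x \<in> A \<Longrightarrow> psd x \<Longrightarrow> tr x \<in> \<real>"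
  using trace unfolding is_trace_def by blast

lemma trace_psd_nonneg: "x \<in> A \<Longrightarrow> psd x \<Longrightarrow> 0 \<le> Re (tr x)"
  using trace unfolding is_trace_def by blast

lemma trace_faithful: "x \<in> A \<Longrightarrow> psd x \<Longrightarrow> tr x = 0 \<Longrightarrow> x = 0"
  using trace unfolding is_trace_def by blast

lemma trace_scaleR: "x \<in> A \<Longrightarrow> tr (r *\<^sub>R x) = of_real r * tr x"
  using trace_mat_mult[of x "of_real r"] by (simp add: mat_of_real_mult)

lemma trace_zero: "tr 0 = 0"
  using trace_mat_mult[OF zero_mem, of 0] by simp

lemma trace_diff: "x \<in> A \<Longrightarrow> y \<in> A \<Longrightarrow> tr (x - y) = tr x - tr y"
  using trace_add[of "x - y" y] diff_mem[of x y] by simp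

lemma trace_mono: "x \<in> A \<Longrightarrow> y \<in> A \<Longrightarrow> psd (y - x) \<Longrightarrow> Re (tr x) \<le> Re (tr y)"
  using trace_psd_nonneg[of "y - x"] trace_diff[of y x] diff_mem[of y x] by simp

lemma trace_hermitian_real:
  assumes "x \<in> A" and "cadj x = x"
  shows "tr x \<in> \<real>"
proof -
  let ?c = "mat (complex_of_real (opnorm x))"
  have "tr (x + ?c) \<in> \<real>"
    using trace_psd_real[OF add_mem[OF assms(1) mat_mem] psd_add_opnorm[OF assms(2)]] .
  moreover have "tr ?c \<in> \<real>"
  proof -
    have "tr ?c = tr (?c ** mat 1)" by simp
    also have "\<dots> = complex_of_real (opnorm x) * tr (mat 1)" by (rule trace_mat_mult[OF mat_mem])
    finally show ?thesis using trace_psd_real[OF mat_mem psd_one] by simp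
  qed
  moreover have "tr x = tr (x + ?c) - tr ?c" using trace_add[OF assms(1) mat_mem] by simp
  ultimately show ?thesis by simp
qed

lemma trace_cadj:
  assumes "x \<in> A"
  shows "tr (cadj x) = cnj (tr x)"
proof -
  have xs: "cadj x \<in> A" using assms by (rule cadj_mem)
  have "tr (x + cadj x) \<in> \<real>"
    using assms xs by (intro trace_hermitian_real add_mem) (simp_all add: cadj_add add.commute)
  then have re: "Im (tr x + tr (cadj x)) = 0"
    using trace_add[OF assms xs] by (simp add: complex_is_Real_iff)
  have "cadj (mat \<i> ** (x - cadj x)) = mat \<i> ** (x - cadj x)"
    by (simp add: cadj_mat_mult cadj_diff matrix_diff_ldistrib mat_mult_left_nth vec_eq_iff algebra_simps)
  then have "tr (mat \<i> ** (x - cadj x)) \<in> \<real>"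
    using assms xs by (intro trace_hermitian_real mat_mult_mem diff_mem)
  then have im: "Im (\<i> * (tr x - tr (cadj x))) = 0"
    using trace_mat_mult[OF diff_mem[OF assms xs]] trace_diff[OF assms xs] by (simp add: complex_is_Real_iff)
  from re im show ?thesis by (simp add: complex_eq_iff)
qed

lemma trace_compress:
  assumes "H \<in> A" and "P \<in> A" and "P ** P = P"
  shows "tr (P ** H ** P) = tr (H ** P)"
proof -
  have "tr (P ** H ** P) = tr (P ** (P ** H))"
    using assms by (intro trace_commute mult_mem)
  also have "\<dots> = tr (P ** H)" using assms(3) by (simp add: matrix_mul_assoc)
  finally show ?thesis using trace_commute[OF assms(2,1)] by simp
qed

lemma trace_mult_projection_nonneg:
  assumes "H \<in> A" and "psd H" and "P \<in> A" and "P ** P = P" and "cadj P = P"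
  shows "0 \<le> Re (tr (H ** P))"
proof -
  have "psd (P ** H ** P)" using psd_sandwich[OF assms(2), of P] assms(5) by simp
  then show ?thesis
    using trace_psd_nonneg[of "P ** H ** P"] trace_compress[OF assms(1,3,4)] assms(1,3)
    by (simp add: mult_mem)
qed

lemma norm2_sq: "z \<in> A \<Longrightarrow> (norm2 tr z)\<^sup>2 = Re (tr (cadj z ** z))"
  unfolding norm2_eq using trace_psd_nonneg[OF mult_mem[OF cadj_mem] psd_cadj_mult_self] by simp

lemma norm2_nonneg: "z \<in> A \<Longrightarrow> 0 \<le> norm2 tr z"
  unfolding norm2_eq using trace_psd_nonneg[OF mult_mem[OF cadj_mem] psd_cadj_mult_self] by simp

lemma norm2_pos:
  assumes "z \<in> A" and "z \<noteq> 0"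
  shows "0 < norm2 tr z"
proof -
  have zz: "cadj z ** z \<in> A" using assms(1) by (intro mult_mem cadj_mem)
  have "tr (cadj z ** z) \<noteq> 0"
    using trace_faithful[OF zz psd_cadj_mult_self] cadj_mult_self_eq_zeroD assms(2) by blast
  then have "Re (tr (cadj z ** z)) \<noteq> 0"
    using trace_psd_real[OF zz psd_cadj_mult_self] by (simp add: complex_is_Real_iff complex_eq_iff)
  then show ?thesis
    unfolding norm2_eq using trace_psd_nonneg[OF zz psd_cadj_mult_self] by simp
qed

lemma Re_trace_cadj_mult_commute:
  assumes "z \<in> A" and "w \<in> A"
  shows "Re (tr (cadj z ** w)) = Re (tr (cadj w ** z))"
proof -
  have "tr (cadj z ** w) = cnj (tr (cadj w ** z))"
    using trace_cadj[OF mult_mem[OF cadj_mem[OF assms(2)] assms(1)]] by (simp add: cadj_mult)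
  then show ?thesis by simp
qed

lemma norm2_add_scaleR_sq:
  assumes z: "z \<in> A" and w: "w \<in> A"
  shows "(norm2 tr (z + s *\<^sub>R w))\<^sup>2
    = (norm2 tr z)\<^sup>2 + 2 * s * Re (tr (cadj w ** z)) + s\<^sup>2 * (norm2 tr w)\<^sup>2"
proof -
  have mem: "cadj z ** z \<in> A" "cadj z ** w \<in> A" "cadj w ** z \<in> A" "cadj w ** w \<in> A"
    using z w by (auto intro: mult_mem cadj_mem)
  have "cadj (z + s *\<^sub>R w) ** (z + s *\<^sub>R w)
      = cadj z ** z + s *\<^sub>R (cadj z ** w) + s *\<^sub>R (cadj w ** z) + (s * s) *\<^sub>R (cadj w ** w)"
    by (simp add: cadj_add cadj_scaleR matrix_add_ldistrib matrix_add_rdistrib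
        matrix_mul_scaleR_left matrix_mul_scaleR_right scaleR_add_right)
  then have "tr (cadj (z + s *\<^sub>R w) ** (z + s *\<^sub>R w)) = tr (cadj z ** z)
      + of_real s * tr (cadj z ** w) + of_real s * tr (cadj w ** z) + of_real (s * s) * tr (cadj w ** w)"
    using mem by (simp add: trace_add trace_scaleR add_mem scaleR_mem)
  then show ?thesis
    unfolding norm2_sq[OF add_mem[OF z scaleR_mem[OF w]]] norm2_sq[OF z] norm2_sq[OF w]
    using Re_trace_cadj_mult_commute[OF z w] by (simp add: power2_eq_square algebra_simps)
qed

lemma trace_cauchy_schwarz:
  assumes z: "z \<in> A" and w: "w \<in> A"
  shows "Re (tr (cadj w ** z)) \<le> norm2 tr w * norm2 tr z"
proof -
  define a b R where "a = norm2 tr w" and "b = norm2 tr z" and "R = Re (tr (cadj w ** z))"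
  have "0 \<le> a" "0 \<le> b" unfolding a_def b_def using z w by (simp_all add: norm2_nonneg)
  have quadratic: "0 \<le> b\<^sup>2 + 2 * s * R + s\<^sup>2 * a\<^sup>2" for s
    using norm2_add_scaleR_sq[OF z w, of s] norm2_nonneg[OF add_mem[OF z scaleR_mem[OF w]], of s]
    unfolding a_def b_def R_def by (metis zero_le_power2)
  have "R \<le> a * b"
  proof (cases "a = 0")
    case True
    have "R \<le> 0"
    proof (rule ccontr)
      assume "\<not> R \<le> 0"
      then show False
        using quadratic[of "- (b\<^sup>2 + 1) / (2 * R)"] True by (simp add: field_simps)
    qed
    then show ?thesis using True by simp
  next
    case False
    then have "0 < a" using \<open>0 \<le> a\<close> by simp
    have "0 \<le> b\<^sup>2 + 2 * (- R / a\<^sup>2) * R + (- R / a\<^sup>2)\<^sup>2 * a\<^sup>2" by (rule quadratic)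
    also have "\<dots> = b\<^sup>2 - (R / a)\<^sup>2" using \<open>0 < a\<close> by (simp add: field_simps power2_eq_square)
    finally have "(R / a)\<^sup>2 \<le> b\<^sup>2" by simp
    then have "R / a \<le> b" using \<open>0 \<le> b\<close> by (rule power2_le_imp_le)
    then show ?thesis using \<open>0 < a\<close> by (simp add: divide_le_eq mult.commute)
  qed
  then show ?thesis unfolding a_def b_def R_def .
qed

lemma norm2_triangle:
  assumes z: "z \<in> A" and w: "w \<in> A"
  shows "norm2 tr (z + w) \<le> norm2 tr z + norm2 tr w"
proof -
  have "(norm2 tr (z + w))\<^sup>2 = (norm2 tr z)\<^sup>2 + 2 * Re (tr (cadj w ** z)) + (norm2 tr w)\<^sup>2"
    using norm2_add_scaleR_sq[OF z w, of 1] by simp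
  also have "\<dots> \<le> (norm2 tr z + norm2 tr w)\<^sup>2"
    using trace_cauchy_schwarz[OF z w] by (simp add: power2_eq_square algebra_simps)
  finally show ?thesis
    by (rule power2_le_imp_le) (simp add: z w norm2_nonneg)
qed

lemma norm2_mult_contraction:
  assumes X: "X \<in> A" and w: "w \<in> A" and contr: "psd (mat 1 - cadj X ** X)"
  shows "norm2 tr (X ** w) \<le> norm2 tr w"
proof -
  have "cadj w ** (mat 1 - cadj X ** X) ** w = cadj w ** w - cadj (X ** w) ** (X ** w)"
    by (simp add: cadj_mult matrix_diff_ldistrib matrix_diff_rdistrib matrix_mul_assoc)
  then have "Re (tr (cadj (X ** w) ** (X ** w))) \<le> Re (tr (cadj w ** w))"
    using psd_sandwich[OF contr, of w] X w by (intro trace_mono) (auto intro: mult_mem cadj_mem)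
  then show ?thesis unfolding norm2_eq by (rule real_sqrt_le_mono)
qed

lemma norm2_mult_sq_le:
  assumes K: "K \<in> A" "psd K" "psd (mat 1 - K)" and w: "w \<in> A"
  shows "(norm2 tr (K ** w))\<^sup>2 \<le> (opnorm w)\<^sup>2 * Re (tr K)"
proof -
  let ?c = "(opnorm w)\<^sup>2"
  have herm: "cadj K = K" using K(2) by (rule psd_hermitian)
  have mem: "K ** (w ** cadj w) ** K \<in> A" "?c *\<^sub>R (K ** K) \<in> A" "K ** K \<in> A"
    using K w by (auto intro: mult_mem cadj_mem scaleR_mem)
  have "tr (cadj (K ** w) ** (K ** w)) = tr ((K ** w) ** (cadj w ** K))"
    unfolding cadj_mult herm using K w by (intro trace_commute mult_mem cadj_mem)
  then have "(norm2 tr (K ** w))\<^sup>2 = Re (tr (K ** (w ** cadj w) ** K))"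
    using K w by (simp add: norm2_sq mult_mem matrix_mul_assoc)
  also have "\<dots> \<le> Re (tr (?c *\<^sub>R (K ** K)))"
  proof (rule trace_mono[OF mem(1,2)])
    have "cadj K ** (mat (complex_of_real ?c) - w ** cadj w) ** K = ?c *\<^sub>R (K ** K) - K ** (w ** cadj w) ** K"
      unfolding herm
      by (simp add: matrix_diff_ldistrib matrix_diff_rdistrib matrix_mul_mat_of_real_middle del: of_real_power)
    then show "psd (?c *\<^sub>R (K ** K) - K ** (w ** cadj w) ** K)"
      using psd_sandwich[OF psd_sq_bound_minus_mult_cadj[OF opnorm_nonneg opnorm_le]] by metis
  qed
  also have "\<dots> = ?c * Re (tr (K ** K))" using trace_scaleR[OF mem(3)] by simp
  also have "\<dots> \<le> ?c * Re (tr K)"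
    using trace_mono[OF mem(3) K(1)] psd_scaled_minus_square[of K 1] K by (simp add: mult_left_mono)
  finally show ?thesis .
qed

end

lemma linear_extension_from_subspace:
  fixes f :: "'a::euclidean_space \<Rightarrow> real"
  assumes S: "subspace S"
    and add: "\<And>x y. x \<in> S \<Longrightarrow> y \<in> S \<Longrightarrow> f (x + y) = f x + f y"
    and scale: "\<And>c x. x \<in> S \<Longrightarrow> f (c *\<^sub>R x) = c * f x"
  obtains g where "linear g" and "\<And>x. x \<in> S \<Longrightarrow> g x = f x"
proof -
  obtain B where B: "B \<subseteq> S" "independent B" "S \<subseteq> span B"
    using basis_exists[of S] by metis
  obtain g where g: "linear g" "\<forall>x\<in>B. g x = f x"
    using linear_independent_extend[OF B(2)] by metis
  have "subspace {x \<in> S. g x = f x}"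
    unfolding subspace_def
  proof (intro conjI ballI allI)
    show "0 \<in> {x \<in> S. g x = f x}"
      using subspace_0[OF S] scale[of 0 0] linear_0[OF g(1)] by simp
    fix x y assume "x \<in> {x \<in> S. g x = f x}" "y \<in> {x \<in> S. g x = f x}"
    then show "x + y \<in> {x \<in> S. g x = f x}"
      using subspace_add[OF S] add linear_add[OF g(1)] by simp
  next
    fix c x assume "x \<in> {x \<in> S. g x = f x}"
    then show "c *\<^sub>R x \<in> {x \<in> S. g x = f x}"
      using subspace_scale[OF S] scale linear_scale[OF g(1)] by simp
  qed
  moreover have "B \<subseteq> {x \<in> S. g x = f x}" using B(1) g(2) by auto
  ultimately have "span B \<subseteq> {x \<in> S. g x = f x}" by (simp add: span_minimal)
  then have "\<And>x. x \<in> S \<Longrightarrow> g x = f x" using B(3) by blast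
  with g(1) show ?thesis by (rule that)
qed

lemma continuous_on_cadj_mult_self: "continuous_on S (\<lambda>w :: complex^'n^'n. cadj w ** w)"
proof -
  have eq: "(\<lambda>w :: complex^'n^'n. cadj w ** w) = (\<lambda>w. \<chi> i j. \<Sum>k\<in>UNIV. cnj (w $ k $ i) * w $ k $ j)"
    by (simp add: cadj_def matrix_matrix_mult_def)
  show ?thesis unfolding eq by (intro continuous_intros)
qed

lemma mat_one_neq_zero: "mat 1 \<noteq> (0 :: complex^'n^'n)"
  by (simp add: mat_def vec_eq_iff)

context traced_algebra
begin

lemma norm2_scaleR_sq: "w \<in> A \<Longrightarrow> (norm2 tr (c *\<^sub>R w))\<^sup>2 = c\<^sup>2 * (norm2 tr w)\<^sup>2"
  using norm2_add_scaleR_sq[OF zero_mem, of w c] trace_zero norm2_sq[OF zero_mem] by simp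

text \<open>On the finite-dimensional space \<open>A\<close> the Hilbert--Schmidt norm is a genuine norm, hence
  equivalent to the Euclidean one: minimise it over the compact unit sphere of \<open>A\<close>.\<close>

lemma norm_sq_le_norm2_sq: "\<exists>C>0. \<forall>w\<in>A. (norm w)\<^sup>2 \<le> C * (norm2 tr w)\<^sup>2"
proof -
  obtain g where g: "linear g" and g_tr: "\<And>x. x \<in> A \<Longrightarrow> g x = Re (tr x)"
    by (rule linear_extension_from_subspace[OF subspace, of "\<lambda>x. Re (tr x)"])
      (simp_all add: trace_add trace_scaleR)
  define f where "f w = g (cadj w ** w)" for w :: "complex^'n^'n"
  have f_norm2: "f w = (norm2 tr w)\<^sup>2" if "w \<in> A" for w
    unfolding f_def using that by (simp add: g_tr mult_mem cadj_mem norm2_sq)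
  define K where "K = A \<inter> sphere 0 1"
  have "compact K"
    unfolding K_def by (intro closed_Int_compact closed_subspace subspace compact_sphere)
  moreover have "mat 1 /\<^sub>R norm (mat 1 :: complex^'n^'n) \<in> K"
    unfolding K_def using scaleR_mem[OF mat_mem] mat_one_neq_zero by (simp add: field_simps)
  then have "K \<noteq> {}" by blast
  moreover have "continuous_on K f"
    unfolding f_def using g
    by (intro continuous_on_compose2[OF _ continuous_on_cadj_mult_self, of UNIV])
      (auto intro: linear_continuous_on simp: linear_conv_bounded_linear)
  ultimately obtain w0 where w0: "w0 \<in> K" "\<forall>w\<in>K. f w0 \<le> f w"
    using continuous_attains_inf by blast
  define m where "m = f w0"
  have "w0 \<in> A" "w0 \<noteq> 0" using w0(1) unfolding K_def by auto
  then have "m > 0" unfolding m_def f_norm2[OF \<open>w0 \<in> A\<close>] using norm2_pos[of w0] by simp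
  have "(norm w)\<^sup>2 \<le> (1 / m) * (norm2 tr w)\<^sup>2" if "w \<in> A" for w
  proof (cases "w = 0")
    case False
    then have "w /\<^sub>R norm w \<in> K" unfolding K_def using scaleR_mem[OF that] by simp
    then have "m \<le> f (w /\<^sub>R norm w)" using w0(2) unfolding m_def by blast
    also have "\<dots> = (norm2 tr w)\<^sup>2 / (norm w)\<^sup>2"
      using f_norm2[OF scaleR_mem[OF that]] norm2_scaleR_sq[OF that]
      by (simp add: divide_inverse power_inverse)
    finally show ?thesis using False \<open>m > 0\<close> by (simp add: field_simps)
  qed (simp add: \<open>m > 0\<close> less_imp_le)
  then show ?thesis using \<open>m > 0\<close> by (intro exI[of _ "1 / m"]) simp
qed

lemma norm1_nonneg: "z \<in> A \<Longrightarrow> 0 \<le> norm1 tr z"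
  unfolding norm1_def by (rule trace_psd_nonneg[OF absm_mem psd_absm])

lemma norm1_pos:
  assumes "z \<in> A" and "z \<noteq> 0"
  shows "0 < norm1 tr z"
proof -
  have "absm z \<noteq> 0"
    using absm_mult_self[of z] cadj_mult_self_eq_zeroD assms(2) by fastforce
  then have "tr (absm z) \<noteq> 0" using trace_faithful[OF absm_mem[OF assms(1)] psd_absm] by blast
  then have "Re (tr (absm z)) \<noteq> 0"
    using trace_psd_real[OF absm_mem[OF assms(1)] psd_absm] by (simp add: complex_is_Real_iff complex_eq_iff)
  then show ?thesis using norm1_nonneg[OF assms(1)] unfolding norm1_def by simp
qed

lemma norm1_scaleR: "z \<in> A \<Longrightarrow> 0 \<le> c \<Longrightarrow> norm1 tr (c *\<^sub>R z) = c * norm1 tr z"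
  unfolding norm1_def by (simp add: absm_scaleR trace_scaleR absm_mem)

lemma norm2_absm: "norm2 tr (absm z) = norm2 tr z"
  unfolding norm2_eq psd_hermitian[OF psd_absm] absm_mult_self ..

lemma norm2_sq_le_opnorm_norm1:
  assumes "z \<in> A"
  shows "(norm2 tr z)\<^sup>2 \<le> opnorm (absm z) * norm1 tr z"
proof -
  let ?X = "absm z"
  have X: "?X \<in> A" "psd ?X" using assms by (simp_all add: absm_mem psd_absm)
  have "(norm2 tr z)\<^sup>2 = Re (tr (?X ** ?X))"
    using norm2_sq[OF X(1)] unfolding norm2_absm psd_hermitian[OF X(2)] .
  also have "\<dots> \<le> Re (tr (opnorm ?X *\<^sub>R ?X))"
    using X psd_scaled_minus_square[OF X(2) psd_opnorm_minus[OF X(2)]]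
    by (intro trace_mono) (auto intro: mult_mem scaleR_mem)
  also have "\<dots> = opnorm ?X * norm1 tr z"
    unfolding norm1_def trace_scaleR[OF X(1)] by simp
  finally show ?thesis .
qed

end

text \<open>The contraction is \<open>a = z (z\<^sup>* z)\<^sup>-\<^sup>1\<^sup>/\<^sup>2\<close>, the inverse square root being taken on the
  support of \<open>z\<^sup>* z\<close> only.\<close>

lemma (in vn_algebra) polar_decomposition:
  assumes z: "z \<in> A"
  obtains a where "a \<in> A" "absm z = cadj a ** z" "psd (mat 1 - a ** cadj a)"
proof -
  define M where "M = cadj z ** z"
  have M: "M \<in> A" "psd M" unfolding M_def using z by (simp_all add: mult_mem cadj_mem psd_cadj_mult_self)
  have herm: "cadj M = M" using M(2) by (rule psd_hermitian)
  have nonneg: "0 \<le> \<mu>" if "M *v e = \<mu> *\<^sub>R e" "e \<noteq> 0" for \<mu> e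
    using psd_eigenvalue_nonneg[OF M(2) that] .
  obtain q where q: "q \<in> A" "cadj q = q" "fun_calc M (\<lambda>\<mu>. if \<mu> = 0 then 0 else 1 / sqrt \<mu>) q"
    by (rule fun_calc_exists[OF M(1) herm])
  obtain r where r: "cadj r = r" "fun_calc M (\<lambda>\<mu>. if \<mu> = 0 then 1 else 0) r"
    by (rule fun_calc_exists[OF M(1) herm])
  have qM: "q ** M = absm z"
    by (rule fun_calc_unique[OF herm fun_calc_mult[OF q(3) fun_calc_self] fun_calc_absm[of z, folded M_def]])
      (auto dest: nonneg simp: real_div_sqrt)
  have "mat 1 - q ** M ** q = cadj r ** r"
    unfolding r(1)
    by (rule fun_calc_unique[OF herm fun_calc_diff[OF fun_calc_one
          fun_calc_mult[OF fun_calc_mult[OF q(3) fun_calc_self] q(3)]] fun_calc_mult[OF r(2) r(2)]])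
      (auto dest: nonneg)
  moreover have "cadj (z ** q) ** (z ** q) = q ** M ** q"
    unfolding M_def by (simp add: cadj_mult q(2) matrix_mul_assoc)
  ultimately have "psd (mat 1 - cadj (z ** q) ** (z ** q))"
    using psd_cadj_mult_self[of r] by simp
  then have "psd (mat 1 - (z ** q) ** cadj (z ** q))"
    using psd_sq_bound_minus_mult_cadj[of 1 "z ** q"] norm_le_if_psd_one_minus_cadj_mult
    by fastforce
  moreover have "absm z = cadj (z ** q) ** z"
    unfolding qM[symmetric] M_def by (simp add: cadj_mult q(2) matrix_mul_assoc)
  moreover have "z ** q \<in> A" using z q(1) by (rule mult_mem)
  ultimately show ?thesis using that by blast
qed

lemma (in traced_algebra) norm2_sq_compress_le:
  assumes H: "H \<in> A" "psd H" "psd (mat 1 - H)"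
    and P: "P \<in> A" "P ** P = P" "cadj P = P"
    and a: "a \<in> A" "psd (mat 1 - a ** cadj a)"
  shows "(norm2 tr (P ** H ** a))\<^sup>2 \<le> Re (tr (H ** P))"
proof -
  define Y where "Y = P ** H"
  have Y: "Y \<in> A" "cadj Y \<in> A" unfolding Y_def using P(1) H(1) by (simp_all add: mult_mem cadj_mem)
  have "tr (cadj (Y ** a) ** (Y ** a)) = tr ((Y ** a) ** (cadj a ** cadj Y))"
    unfolding cadj_mult using a(1) Y by (intro trace_commute mult_mem cadj_mem)
  then have "(norm2 tr (P ** H ** a))\<^sup>2 = Re (tr (Y ** (a ** cadj a) ** cadj Y))"
    using norm2_sq[OF mult_mem[OF Y(1) a(1)]] unfolding Y_def by (simp add: matrix_mul_assoc)
  also have "\<dots> \<le> Re (tr (Y ** cadj Y))"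
    using psd_sandwich[OF a(2), of "cadj Y"] Y a(1)
    by (intro trace_mono) (auto intro: mult_mem cadj_mem simp: matrix_diff_ldistrib matrix_diff_rdistrib)
  also have "Y ** cadj Y = cadj P ** (H ** H) ** P"
    unfolding Y_def by (simp add: cadj_mult psd_hermitian[OF H(2)] P(3) matrix_mul_assoc)
  also have "Re (tr \<dots>) \<le> Re (tr (cadj P ** H ** P))"
    using psd_sandwich[OF psd_scaled_minus_square[of H 1], of P] H P(1)
    by (intro trace_mono) (auto intro: mult_mem cadj_mem simp: matrix_diff_ldistrib matrix_diff_rdistrib)
  also have "\<dots> = Re (tr (H ** P))" using trace_compress[OF H(1) P(1,2)] P(3) by simp
  finally show ?thesis .
qed

lemma (in traced_algebra) norm1_mult_le:
  assumes H: "H \<in> A" "psd H" "psd (mat 1 - H)" and x: "x \<in> A"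
  shows "norm1 tr (H ** x) \<le> sqrt (Re (tr (H ** rproj x))) * norm2 tr x"
proof -
  define P where "P = rproj x"
  have P: "P \<in> A" "P ** P = P" "cadj P = P" "P ** x = x"
    unfolding P_def using x by (simp_all add: rproj_mem rproj_idem cadj_rproj rproj_mult_self)
  obtain a where a: "a \<in> A" "absm (H ** x) = cadj a ** (H ** x)" "psd (mat 1 - a ** cadj a)"
    using polar_decomposition[OF mult_mem[OF H(1) x]] by blast
  have b: "P ** H ** a \<in> A" using P(1) H(1) a(1) by (simp add: mult_mem)
  have "absm (H ** x) = cadj (P ** H ** a) ** x"
    unfolding a(2) using P(4)
    by (simp add: cadj_mult P(3) psd_hermitian[OF H(2)] flip: matrix_mul_assoc)
  then have "norm1 tr (H ** x) = Re (tr (cadj (P ** H ** a) ** x))" unfolding norm1_def by simp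
  also have "\<dots> \<le> norm2 tr (P ** H ** a) * norm2 tr x" by (rule trace_cauchy_schwarz[OF x b])
  also have "\<dots> \<le> sqrt (Re (tr (H ** P))) * norm2 tr x"
    using real_le_rsqrt[OF norm2_sq_compress_le[OF H P(1-3) a(1,3)]] norm2_nonneg[OF x]
    by (rule mult_right_mono)
  finally show ?thesis unfolding P_def .
qed

section \<open>The uncertainty principle\<close>

lemma le_Inf_mult_Inf:
  fixes S T :: "real set"
  assumes ne: "S \<noteq> {}" "T \<noteq> {}" and nonneg: "\<And>a. a \<in> S \<Longrightarrow> 0 \<le> a" "\<And>b. b \<in> T \<Longrightarrow> 0 \<le> b"
    and bound: "\<And>a b. a \<in> S \<Longrightarrow> b \<in> T \<Longrightarrow> c \<le> a * b" and "0 \<le> c"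
  shows "c \<le> Inf S * Inf T"
proof (cases "c = 0")
  case True
  then show ?thesis using ne nonneg by (simp add: cInf_greatest)
next
  case False
  then have "0 < c" using \<open>0 \<le> c\<close> by simp
  have pos: "0 < b" if "b \<in> T" for b
  proof -
    obtain a where "a \<in> S" using ne(1) by blast
    then show ?thesis
      using bound[OF _ that] nonneg(1)[OF \<open>a \<in> S\<close>] nonneg(2)[OF that] \<open>0 < c\<close>
      by (cases "b = 0") auto
  qed
  have le_Inf_S: "c / b \<le> Inf S" if "b \<in> T" for b
    using ne(1) bound[OF _ that] pos[OF that] by (intro cInf_greatest) (simp_all add: divide_le_eq)
  obtain b0 where "b0 \<in> T" using ne(2) by blast
  then have "0 < Inf S"
    using le_Inf_S[of b0] divide_pos_pos[OF \<open>0 < c\<close> pos[of b0]] by linarith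
  have "c / Inf S \<le> Inf T"
    using ne(2) le_Inf_S pos \<open>0 < Inf S\<close> by (intro cInf_greatest) (simp_all add: field_simps)
  then show ?thesis using \<open>0 < Inf S\<close> by (simp add: divide_le_eq mult.commute)
qed

lemma psd_one_minus_projection:
  assumes "Q ** Q = Q" and "cadj Q = Q"
  shows "psd (mat 1 - Q)"
proof -
  have "cadj (mat 1 - Q) ** (mat 1 - Q) = mat 1 - Q"
    using assms by (simp add: cadj_diff matrix_diff_ldistrib matrix_diff_rdistrib)
  then show ?thesis using psd_cadj_mult_self[of "mat 1 - Q"] by simp
qed

lemma psd_one_minus_compress:
  assumes Q: "Q ** Q = Q" "cadj Q = Q" and K: "psd (mat 1 - K)"
  shows "psd (mat 1 - Q ** K ** Q)"
proof -
  have "mat 1 - Q ** K ** Q = (mat 1 - Q) + cadj Q ** (mat 1 - K) ** Q"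
    using Q by (simp add: matrix_diff_ldistrib matrix_diff_rdistrib)
  moreover have "psd ((mat 1 - Q) + cadj Q ** (mat 1 - K) ** Q)"
    by (rule psd_add[OF psd_one_minus_projection[OF Q] psd_sandwich[OF K]])
  ultimately show ?thesis by (simp only:)
qed

lemma psd_one_minus_square:
  assumes "psd X" and "psd (mat 1 - X)"
  shows "psd (mat 1 - cadj X ** X)"
  using psd_add[OF assms(2) psd_scaled_minus_square[OF assms(1), of 1]] assms
  by (simp add: psd_hermitian)

definition admissible ::
  "(complex^'n^'n) set \<Rightarrow> (complex^'n^'n \<Rightarrow> complex) \<Rightarrow> real \<Rightarrow> complex^'n^'n \<Rightarrow> complex^'n^'n \<Rightarrow> bool"
  where "admissible M t eps x H \<longleftrightarrow>
    H \<in> M \<and> psd H \<and> psd (mat 1 - H) \<and> norm2 t ((mat 1 - H) ** x) \<le> eps * norm2 t x"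

lemma smooth_supp2_admissible:
  "smooth_supp2 M t eps x = Inf {Re (t (H ** rproj x)) | H. admissible M t eps x H}"
  unfolding smooth_supp2_def admissible_def ..

context traced_algebra
begin

lemma admissible_one: "x \<in> A \<Longrightarrow> 0 \<le> eps \<Longrightarrow> admissible A tr eps x (mat 1)"
  unfolding admissible_def
  using norm2_sq[OF zero_mem] trace_zero norm2_nonneg[of x] by (simp add: mat_mem psd_one psd_zero)

lemma admissible_support_nonneg: "x \<in> A \<Longrightarrow> admissible A tr eps x H \<Longrightarrow> 0 \<le> Re (tr (H ** rproj x))"
  unfolding admissible_def
  by (simp add: trace_mult_projection_nonneg rproj_mem rproj_idem cadj_rproj)

end

locale k_bialgebra =
  A: traced_algebra A d + B: traced_algebra B t
  for A :: "(complex^'n^'n) set" and d and B :: "(complex^'m^'m) set" and t +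
  fixes k :: real and F :: "complex^'n^'n \<Rightarrow> complex^'m^'m" and Fs :: "complex^'m^'m \<Rightarrow> complex^'n^'n"
  assumes k_pos: "0 < k"
    and adjoint: "is_map_adjoint A B d t F Fs"
    and transform: "k_transform A B d t k F Fs"
    and Fs_F: "\<forall>y\<in>A. Fs (F y) = mat (complex_of_real k) ** y"
begin

lemma F_mem: "z \<in> A \<Longrightarrow> F z \<in> B"
  using transform unfolding k_transform_def by blast

lemma F_add: "z \<in> A \<Longrightarrow> w \<in> A \<Longrightarrow> F (z + w) = F z + F w"
  using transform unfolding k_transform_def clinear_map_def by blast

lemma F_scaleR: "z \<in> A \<Longrightarrow> F (c *\<^sub>R z) = c *\<^sub>R F z"
  using transform unfolding k_transform_def clinear_map_def by (metis mat_of_real_mult)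

lemma norm2_F: "z \<in> A \<Longrightarrow> norm2 t (F z) = sqrt k * norm2 d z"
proof -
  assume z: "z \<in> A"
  have "t (cadj (F z) ** F z) = t (F z ** cadj (F z))"
    using z by (intro B.trace_commute B.cadj_mem F_mem)
  also have "\<dots> = d (z ** cadj (Fs (F z)))"
    using adjoint z F_mem[OF z] unfolding is_map_adjoint_def by blast
  also have "\<dots> = d (mat (complex_of_real k) ** (cadj z ** z))"
    using Fs_F z A.trace_commute[of z "cadj (mat (complex_of_real k) ** z)"]
    by (simp add: cadj_mat_mult mat_mult_commute matrix_mul_assoc A.cadj_mem A.mat_mult_mem
        A.trace_commute[of z "cadj z"])
  also have "\<dots> = complex_of_real k * d (cadj z ** z)"
    using z by (intro A.trace_mat_mult A.mult_mem A.cadj_mem)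
  finally show ?thesis
    unfolding norm2_eq using k_pos by (simp add: real_sqrt_mult)
qed

text \<open>The supremum in \<^const>\<open>k_transform\<close> only bounds \<open>\<parallel>F z\<parallel>\<^sub>\<infinity>\<close> once the set is known to be bounded
  above; in finite dimension this follows from the equivalence of all norms.\<close>

lemma bdd_above_opnorm_F: "bdd_above {opnorm (F z) | z. z \<in> A \<and> norm1 d z = 1}"
proof -
  obtain CA where CA: "CA > 0" "\<forall>w\<in>A. (norm w)\<^sup>2 \<le> CA * (norm2 d w)\<^sup>2"
    using A.norm_sq_le_norm2_sq by blast
  obtain CB where CB: "CB > 0" "\<forall>w\<in>B. (norm w)\<^sup>2 \<le> CB * (norm2 t w)\<^sup>2"
    using B.norm_sq_le_norm2_sq by blast
  have "opnorm (F z) \<le> sqrt (CB * (k * CA))" if z: "z \<in> A" and n1: "norm1 d z = 1" for z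
  proof -
    define N where "N = (norm2 d z)\<^sup>2"
    have "N \<le> opnorm (absm z)" using A.norm2_sq_le_opnorm_norm1[OF z] n1 unfolding N_def by simp
    also have "\<dots> \<le> norm (absm z)" by (rule opnorm_le_norm)
    finally have "N\<^sup>2 \<le> (norm (absm z))\<^sup>2" by (rule power_mono) (simp add: N_def)
    also have "\<dots> \<le> CA * N"
      using CA(2) A.absm_mem[OF z] A.norm2_absm unfolding N_def by metis
    finally have "N * N \<le> CA * N" by (simp add: power2_eq_square)
    moreover have "0 \<le> N" unfolding N_def by simp
    ultimately have "N \<le> CA" using CA(1) by (cases "N = 0") (auto dest: mult_right_le_imp_le)
    have "(opnorm (F z))\<^sup>2 \<le> (norm (F z))\<^sup>2"
      by (rule power_mono[OF opnorm_le_norm opnorm_nonneg])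
    also have "\<dots> \<le> CB * (norm2 t (F z))\<^sup>2" using CB(2) F_mem[OF z] by blast
    also have "\<dots> = CB * (k * N)"
      unfolding norm2_F[OF z] N_def using k_pos by (simp add: power_mult_distrib)
    also have "\<dots> \<le> CB * (k * CA)" using \<open>N \<le> CA\<close> CB(1) k_pos by simp
    finally show ?thesis by (rule real_le_rsqrt)
  qed
  then show ?thesis by (intro bdd_aboveI) blast
qed

lemma opnorm_F_le_norm1:
  assumes z: "z \<in> A"
  shows "opnorm (F z) \<le> norm1 d z"
proof (cases "z = 0")
  case True
  then show ?thesis using F_scaleR[OF z, of 0] A.norm1_nonneg[OF z] by simp
next
  case False
  define n where "n = norm1 d z"
  have "0 < n" unfolding n_def using A.norm1_pos[OF z False] .
  have "norm1 d ((1 / n) *\<^sub>R z) = 1"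
    using A.norm1_scaleR[OF z, of "1 / n"] \<open>0 < n\<close> unfolding n_def by simp
  then have "opnorm (F ((1 / n) *\<^sub>R z)) \<le> Sup {opnorm (F z) | z. z \<in> A \<and> norm1 d z = 1}"
    using A.scaleR_mem[OF z] by (intro cSup_upper bdd_above_opnorm_F) blast
  also have "\<dots> \<le> 1" using transform unfolding k_transform_def by blast
  finally have "(1 / n) * opnorm (F z) \<le> 1"
    using \<open>0 < n\<close> by (simp add: F_scaleR[OF z] opnorm_scaleR)
  then show ?thesis using \<open>0 < n\<close> unfolding n_def by (simp add: field_simps)
qed

context
  fixes x H K eps eta
  assumes x: "x \<in> A"
    and H: "admissible A d eps x H" and K: "admissible B t eta (F x) K"
begin

definition "K' = rproj (F x) ** K ** rproj (F x)"

lemma K'_mem: "K' \<in> B"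
  unfolding K'_def using F_mem[OF x] K by (simp add: admissible_def B.mult_mem B.rproj_mem)

lemma psd_K': "psd K'"
  unfolding K'_def using psd_sandwich[of K "rproj (F x)"] K by (simp add: admissible_def cadj_rproj)

lemma psd_one_minus_K': "psd (mat 1 - K')"
  unfolding K'_def using K
  by (intro psd_one_minus_compress rproj_idem cadj_rproj) (simp add: admissible_def)

lemma norm2_one_minus_K'_le: "norm2 t ((mat 1 - K') ** F x) \<le> eta * norm2 t (F x)"
proof -
  let ?Q = "rproj (F x)"
  have K0: "K \<in> B" "norm2 t ((mat 1 - K) ** F x) \<le> eta * norm2 t (F x)"
    using K unfolding admissible_def by auto
  have "norm2 t ((mat 1 - K') ** F x) = norm2 t (?Q ** ((mat 1 - K) ** F x))"
    unfolding K'_def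
    by (simp add: matrix_diff_ldistrib matrix_diff_rdistrib rproj_mult_self flip: matrix_mul_assoc)
  also have "\<dots> \<le> norm2 t ((mat 1 - K) ** F x)"
  proof (rule B.norm2_mult_contraction[OF B.rproj_mem[OF F_mem[OF x]]])
    show "(mat 1 - K) ** F x \<in> B" using K0(1) F_mem[OF x] by (simp add: B.mult_mem B.diff_mem B.mat_mem)
    show "psd (mat 1 - cadj ?Q ** ?Q)"
      using psd_one_minus_projection[OF rproj_idem cadj_rproj] by (simp add: rproj_idem cadj_rproj)
  qed
  finally show ?thesis using K0(2) by simp
qed

lemma norm2_K'_F_one_minus_H_le: "norm2 t (K' ** F ((mat 1 - H) ** x)) \<le> sqrt k * (eps * norm2 d x)"
proof -
  have H': "H \<in> A" "norm2 d ((mat 1 - H) ** x) \<le> eps * norm2 d x"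
    using H unfolding admissible_def by auto
  have Hx: "(mat 1 - H) ** x \<in> A" using x H'(1) by (simp add: A.mult_mem A.diff_mem A.mat_mem)
  have "norm2 t (K' ** F ((mat 1 - H) ** x)) \<le> norm2 t (F ((mat 1 - H) ** x))"
    using B.norm2_mult_contraction[OF K'_mem F_mem[OF Hx] psd_one_minus_square[OF psd_K' psd_one_minus_K']] .
  also have "\<dots> \<le> sqrt k * (eps * norm2 d x)"
    unfolding norm2_F[OF Hx] using H'(2) by (rule mult_left_mono) (simp add: less_imp_le[OF k_pos])
  finally show ?thesis .
qed

lemma norm2_compressed_ge: "sqrt k * norm2 d x * (1 - eps - eta) \<le> norm2 t (K' ** F (H ** x))"
proof -
  have "H \<in> A" using H unfolding admissible_def by auto
  then have Hx: "H ** x \<in> A" "(mat 1 - H) ** x \<in> A"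
    using x by (simp_all add: A.mult_mem A.diff_mem A.mat_mem)
  have mem: "K' ** F x \<in> B" "(mat 1 - K') ** F x \<in> B"
    "K' ** F (H ** x) \<in> B" "K' ** F ((mat 1 - H) ** x) \<in> B"
    using K'_mem F_mem[OF x] F_mem[OF Hx(1)] F_mem[OF Hx(2)]
    by (simp_all add: B.mult_mem B.diff_mem B.mat_mem)
  have "F x = F (H ** x) + F ((mat 1 - H) ** x)"
    using F_add[OF Hx] by (simp add: matrix_diff_rdistrib)
  then have split: "K' ** F x = K' ** F (H ** x) + K' ** F ((mat 1 - H) ** x)"
    by (simp add: matrix_add_ldistrib)
  have "norm2 t (F x) \<le> norm2 t (K' ** F x) + norm2 t ((mat 1 - K') ** F x)"
    using B.norm2_triangle[OF mem(1,2)] by (simp add: matrix_diff_rdistrib)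
  also have "norm2 t (K' ** F x) \<le> norm2 t (K' ** F (H ** x)) + norm2 t (K' ** F ((mat 1 - H) ** x))"
    unfolding split by (rule B.norm2_triangle[OF mem(3,4)])
  finally show ?thesis
    using norm2_one_minus_K'_le norm2_K'_F_one_minus_H_le unfolding norm2_F[OF x]
    by (simp add: algebra_simps)
qed

lemma norm2_compressed_sq_le:
  "(norm2 t (K' ** F (H ** x)))\<^sup>2 \<le> Re (d (H ** rproj x)) * (norm2 d x)\<^sup>2 * Re (t (K ** rproj (F x)))"
proof -
  let ?Q = "rproj (F x)"
  have H': "H \<in> A" "psd H" "psd (mat 1 - H)" using H unfolding admissible_def by auto
  have Hx: "H ** x \<in> A" using H'(1) x by (rule A.mult_mem)
  have "(norm2 t (K' ** F (H ** x)))\<^sup>2 \<le> (opnorm (F (H ** x)))\<^sup>2 * Re (t K')"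
    using B.norm2_mult_sq_le[OF K'_mem psd_K' psd_one_minus_K' F_mem[OF Hx]] .
  also have "Re (t K') = Re (t (K ** ?Q))"
    unfolding K'_def using K F_mem[OF x]
    by (simp add: admissible_def B.trace_compress B.rproj_mem rproj_idem)
  also have "opnorm (F (H ** x)) \<le> sqrt (Re (d (H ** rproj x))) * norm2 d x"
    using opnorm_F_le_norm1[OF Hx] A.norm1_mult_le[OF H' x] by simp
  then have "(opnorm (F (H ** x)))\<^sup>2 \<le> Re (d (H ** rproj x)) * (norm2 d x)\<^sup>2"
    using opnorm_nonneg A.admissible_support_nonneg[OF x H]
    by (metis power_mono power_mult_distrib real_sqrt_pow2)
  then have "(opnorm (F (H ** x)))\<^sup>2 * Re (t (K ** ?Q)) \<le> Re (d (H ** rproj x)) * (norm2 d x)\<^sup>2 * Re (t (K ** ?Q))"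
    using B.admissible_support_nonneg[OF F_mem[OF x] K] by (rule mult_right_mono)
  finally show ?thesis .
qed

lemma admissible_product_ge:
  assumes "x \<noteq> 0" and "eps + eta \<le> 1"
  shows "k * (1 - eps - eta)\<^sup>2 \<le> Re (d (H ** rproj x)) * Re (t (K ** rproj (F x)))"
proof -
  have "0 < norm2 d x" using A.norm2_pos[OF x assms(1)] .
  have "(sqrt k * norm2 d x * (1 - eps - eta))\<^sup>2 \<le> (norm2 t (K' ** F (H ** x)))\<^sup>2"
    using norm2_compressed_ge k_pos \<open>0 < norm2 d x\<close> assms(2) by (intro power_mono) simp_all
  also have "\<dots> \<le> Re (d (H ** rproj x)) * (norm2 d x)\<^sup>2 * Re (t (K ** rproj (F x)))"
    by (rule norm2_compressed_sq_le)
  finally show ?thesis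
    using k_pos \<open>0 < norm2 d x\<close> by (simp add: power_mult_distrib mult_ac)
qed

end

end

theorem theorem3p13:
  fixes A :: "(complex^'n^'n) set" and B :: "(complex^'m^'m) set"
    and d :: "complex^'n^'n \<Rightarrow> complex" and t :: "complex^'m^'m \<Rightarrow> complex"
    and F :: "complex^'n^'n \<Rightarrow> complex^'m^'m" and Fs :: "complex^'m^'m \<Rightarrow> complex^'n^'n"
    and k eps eta :: real and x :: "complex^'n^'n"
  assumes "is_vna A" and "is_vna B" and "is_trace A d" and "is_trace B t"
    and "k > 0"
    and "is_map_adjoint A B d t F Fs"
    and "k_transform A B d t k F Fs"
    and "\<forall>y\<in>A. Fs (F y) = mat (complex_of_real k) ** y"
    and "x \<in> A" and "x \<noteq> 0"
    and "0 \<le> eps" and "eps \<le> 1" and "0 \<le> eta" and "eta \<le> 1" and "eps + eta \<le> 1"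
  shows "smooth_supp2 A d eps x * smooth_supp2 B t eta (F x) \<ge> k * (1 - eps - eta)^2"
proof -
  interpret k_bialgebra A d B t k F Fs
    using assms(1-8) by unfold_locales (simp_all add: vn_algebra_def traced_algebra_axioms_def)
  let ?S = "{Re (d (H ** rproj x)) | H. admissible A d eps x H}"
  let ?T = "{Re (t (K ** rproj (F x))) | K. admissible B t eta (F x) K}"
  have "k * (1 - eps - eta)\<^sup>2 \<le> Inf ?S * Inf ?T"
  proof (rule le_Inf_mult_Inf)
    show "?S \<noteq> {}" "?T \<noteq> {}"
      using A.admissible_one[OF assms(9,11)] B.admissible_one[OF F_mem[OF assms(9)] assms(13)] by blast+
    show "\<And>a. a \<in> ?S \<Longrightarrow> 0 \<le> a" "\<And>b. b \<in> ?T \<Longrightarrow> 0 \<le> b"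
      using A.admissible_support_nonneg[OF assms(9)] B.admissible_support_nonneg[OF F_mem[OF assms(9)]]
      by blast+
    show "\<And>a b. a \<in> ?S \<Longrightarrow> b \<in> ?T \<Longrightarrow> k * (1 - eps - eta)\<^sup>2 \<le> a * b"
      using admissible_product_ge[OF assms(9) _ _ assms(10,15)] by blast
  qed (use assms(5) in simp)
  then show ?thesis unfolding smooth_supp2_admissible by simp
qed

end
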